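(* Consider FedAvg with full device participation as described in the context, and let Assumptions (A1)–(A4) hold. Set $\gamma = \max\{8L/\mu,\, E\}$ and learning rates $\eta_t = \frac{2}{\mu(\gamma+t)}$, and let $$B = \sum_{k=1}^N p_k^2\sigma_k^2 + 6L\Gamma + 8(E-1)^2 G^2 .$$ Let $\mathcal{R}$ be a data reconstruction function that is $L_{\mathcal{R}}$-Lipschitz, and let $\mathbf{x}$ be the private data. Then for every round $t \ge 1$, $$\mathbb{E}\,\|\mathbf{x} - \mathcal{R}(\mathbf{w}_t)\|^2 \;\le\; 2\,\mathbb{E}\,\|\mathbf{x} - \mathcal{R}(\mathbf{w}^\star)\|^2 + \frac{2L_{\mathcal{R}}^2}{\gamma + t}\left( \frac{4B}{\mu^2} + (\gamma+1)\,\mathbb{E}\,\|\mathbf{w}_1 - \mathbf{w}^\star\|^2 \right).$$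
   Context: Federated setting: there are $N$ devices with weights $p_k \ge 0$, $\sum_{k=1}^N p_k = 1$. Device $k$ holds a finite dataset $D^k$ and has local objective $\mathcal{L}_k(\mathbf{w}) = \frac{1}{n_k}\sum_{j=1}^{n_k} \ell(\mathbf{w}; (\mathbf{x}^k_j, y^k_j))$; for a sample $\xi$ of $D^k$, $\nabla\mathcal{L}_k(\mathbf{w},\xi)$ denotes the stochastic gradient of the loss at that sample. The global objective is $\mathcal{L}(\mathbf{w}) = \sum_{k=1}^N p_k \mathcal{L}_k(\mathbf{w})$, with minimizer $\mathbf{w}^\star$ and minimum value $\mathcal{L}^\ast$; $\mathcal{L}_k^\ast$ is the minimum value of $\mathcal{L}_k$, and $\Gamma = \mathcal{L}^\ast - \sum_{k=1}^N p_k \mathcal{L}_k^\ast \ (\ge 0)$. FedAvg with full participation: fix an integer $E \ge 1$ and let $\mathcal{I}_E = \{nE : n = 1,2,\dots\}$. All devices start at a common (possibly random) $\mathbf{w}_1^k = \mathbf{w}_1$. For $t = 1,2,\dots$, each device computes $\mathbf{v}^k_{t+1} = \mathbf{w}^k_t - \eta_t \nabla \mathcal{L}_k(\mathbf{w}^k_t, \xi^k_t)$, where $\xi^k_t$ is drawn uniformly at random from $D^k$ (independently). If $t+1 \notin \mathcal{I}_E$ then $\mathbf{w}^k_{t+1} = \mathbf{v}^k_{t+1}$; if $t+1 \in \mathcal{I}_E$ then $\mathbf{w}^k_{t+1} = \sum_{j=1}^N p_j \mathbf{v}^j_{t+1}$ for all $k$. The global model at step $t$ is $\mathbf{w}_t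 = \sum_{k=1}^N p_k \mathbf{w}^k_t$. Assumptions: (A1) each $\mathcal{L}_k$ is $L$-smooth: $\mathcal{L}_k(\mathbf{v}) \le \mathcal{L}_k(\mathbf{w}) + (\mathbf{v}-\mathbf{w})^\top\nabla\mathcal{L}_k(\mathbf{w}) + \frac{L}{2}\|\mathbf{v}-\mathbf{w}\|_2^2$ for all $\mathbf{v},\mathbf{w}$. (A2) each $\mathcal{L}_k$ is $\mu$-strongly convex ($\mu>0$): $\mathcal{L}_k(\mathbf{v}) \ge \mathcal{L}_k(\mathbf{w}) + (\mathbf{v}-\mathbf{w})^\top\nabla\mathcal{L}_k(\mathbf{w}) + \frac{\mu}{2}\|\mathbf{v}-\mathbf{w}\|_2^2$. (A3) $\mathbb{E}\|\nabla\mathcal{L}_k(\mathbf{w}^k_t,\xi^k_t) - \nabla\mathcal{L}_k(\mathbf{w}^k_t)\|^2 \le \sigma_k^2$ for all $k,t$. (A4) $\mathbb{E}\|\nabla\mathcal{L}_k(\mathbf{w}^k_t,\xi^k_t)\|^2 \le G^2$ for all $k,t$. Reconstruction: the private data is $\mathbf{x}\in[0,1]^d$. A data reconstruction function $\mathcal{R}$ maps model parameters to a reconstruction in $\mathbb{R}^d$; it may be randomized (e.g. random initialization), with randomness independent of the FL training, and for every realization of its randomness it satisfies $\|\mathcal{R}(\mathbf{v}) - \mathcal{R}(\mathbf{w})\| \le L_{\mathcal{R}}\|\mathbf{v}-\mathbf{w}\|$ for all $\mathbf{v},\mathbf{w}$. All expectations are over all randomness (stochastic gradients and the randomness of $\mathcal{R}$).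 *)

theory Defs
  imports "HOL-Probability.Probability"
begin

text \<open>Devices are indexed by k < N (the paper uses 1..N). Device k holds the
dataset D k (a nonempty list of samples), n_k = length (D k).
The per-sample loss is ell :: 'a => 'z => real, and g w z is its gradient in w.\<close>

definition local_obj :: "('a \<Rightarrow> 'z \<Rightarrow> real) \<Rightarrow> (nat \<Rightarrow> 'z list) \<Rightarrow> nat \<Rightarrow> 'a \<Rightarrow> real" where
  "local_obj ell D k w = (1 / real (length (D k))) * (\<Sum>j<length (D k). ell w (D k ! j))"

definition local_grad :: "('a \<Rightarrow> 'z \<Rightarrow> 'a::real_vector) \<Rightarrow> (nat \<Rightarrow> 'z list) \<Rightarrow> nat \<Rightarrow> 'a \<Rightarrow> 'a" where
  "local_grad g D k w = (1 / real (length (D k))) *\<^sub>R (\<Sum>j<length (D k). g w (D k ! j))"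

definition global_obj :: "(nat \<Rightarrow> real) \<Rightarrow> nat \<Rightarrow> ('a \<Rightarrow> 'z \<Rightarrow> real) \<Rightarrow> (nat \<Rightarrow> 'z list) \<Rightarrow> 'a \<Rightarrow> real" where
  "global_obj p N ell D w = (\<Sum>k<N. p k * local_obj ell D k w)"

text \<open>FedAvg local iterates. fedavg_w p N E eta sg w1 xi t k is w^k_t for t >= 1
(the value at t = 0 is a junk value). sg k w j is the stochastic gradient of device k
at w using sample index j, and xi t k is the sample index drawn by device k at step t.\<close>

primrec fedavg_w :: "(nat \<Rightarrow> real) \<Rightarrow> nat \<Rightarrow> nat \<Rightarrow> (nat \<Rightarrow> real) \<Rightarrow>
    (nat \<Rightarrow> 'a::real_vector \<Rightarrow> nat \<Rightarrow> 'a) \<Rightarrow> 'a \<Rightarrow> (nat \<Rightarrow> nat \<Rightarrow> nat) \<Rightarrow> nat \<Rightarrow> nat \<Rightarrow> 'a" where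
  "fedavg_w p N E eta sg w1 xi 0 = (\<lambda>k. w1)"
| "fedavg_w p N E eta sg w1 xi (Suc t) =
     (if t = 0 then (\<lambda>k. w1)
      else (let W = fedavg_w p N E eta sg w1 xi t;
                v = (\<lambda>j. W j - eta t *\<^sub>R sg j (W j) (xi t j))
            in if Suc t mod E = 0 then (\<lambda>k. \<Sum>j<N. p j *\<^sub>R v j) else v))"

definition fedavg_global :: "(nat \<Rightarrow> real) \<Rightarrow> nat \<Rightarrow> nat \<Rightarrow> (nat \<Rightarrow> real) \<Rightarrow>
    (nat \<Rightarrow> 'a::real_vector \<Rightarrow> nat \<Rightarrow> 'a) \<Rightarrow> 'a \<Rightarrow> (nat \<Rightarrow> nat \<Rightarrow> nat) \<Rightarrow> nat \<Rightarrow> 'a" where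
  "fedavg_global p N E eta sg w1 xi t = (\<Sum>k<N. p k *\<^sub>R fedavg_w p N E eta sg w1 xi t k)"

text \<open>The probability space of all randomness: the initial model w1 (distribution W1),
the independent uniform sample indices xi_t^k (t, k<N), and the independent
randomness r of the reconstruction function (distribution Q).\<close>

definition fedavg_space :: "'a measure \<Rightarrow> nat \<Rightarrow> (nat \<Rightarrow> 'z list) \<Rightarrow> 'r measure \<Rightarrow>
    ('a \<times> (nat \<times> nat \<Rightarrow> nat) \<times> 'r) measure" where
  "fedavg_space W1 N D Q =
     W1 \<Otimes>\<^sub>M ((\<Pi>\<^sub>M tk\<in>UNIV \<times> {..<N}. measure_pmf (pmf_of_set {..<length (D (snd tk))})) \<Otimes>\<^sub>M Q)"

end

theory Submission
  imports Defs
begin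

text \<open>The Lipschitz bound on the reconstruction map gives
  \<open>\<parallel>x - R(w\<^sub>t)\<parallel>\<^sup>2 \<le> 2\<parallel>x - R(w\<^sup>*)\<parallel>\<^sup>2 + 2 L\<^sub>R\<^sup>2 \<parallel>w\<^sub>t - w\<^sup>*\<parallel>\<^sup>2\<close>, so everything reduces to the convergence
  estimate \<open>E\<parallel>w\<^sub>t - w\<^sup>*\<parallel>\<^sup>2 \<le> (4B/\<mu>\<^sup>2 + (\<gamma>+1) E\<parallel>w\<^sub>1 - w\<^sup>*\<parallel>\<^sup>2) / (\<gamma>+t)\<close> for FedAvg.
  One round of the averaged model is compared with a full-gradient step from it (the virtual
  gap). The sample indices drawn at a step are independent and uniform, so averaging over each
  draw in turn adds exactly the variances of the sampled gradients. Smoothness and strong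
  convexity contract the virtual gap by \<open>1 - \<mu>\<eta>\<^sub>t\<close>, up to the client drift and the heterogeneity
  \<open>\<Gamma>\<close>; the drift is of order \<open>\<eta>\<^sub>t\<^sup>2 (E-1)\<^sup>2 G\<^sup>2\<close> because all devices shared the model at the last
  averaging step, at most E - 1 steps earlier. With \<open>\<eta>\<^sub>t = 2/(\<mu>(\<gamma>+t))\<close> the resulting
  recursion yields the rate \<open>1/(\<gamma>+t)\<close> by induction.\<close>

lemma norm_diff_sq_expand:
  fixes a b :: "'a::real_inner"
  shows "(norm (a - c *\<^sub>R b))\<^sup>2 = (norm a)\<^sup>2 - 2 * c * (a \<bullet> b) + c\<^sup>2 * (norm b)\<^sup>2"
  unfolding power2_norm_eq_inner
  by (simp add: inner_diff_left inner_diff_right inner_commute algebra_simps power2_eq_square)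

lemma young_inner_le:
  fixes a b :: "'a::real_inner"
  shows "- 2 * c * (a \<bullet> b) \<le> (norm a)\<^sup>2 + c\<^sup>2 * (norm b)\<^sup>2"
  using norm_diff_sq_expand[of a "- c" b] zero_le_power2[of "norm (a + c *\<^sub>R b)"] by simp

lemma mean_sq_norm_diff_centered:
  fixes X :: "'a::real_inner" and Z :: "nat \<Rightarrow> 'a"
  assumes "n > 0" "(\<Sum>j<n. Z j) = 0"
  shows "(\<Sum>j<n. (norm (X - c *\<^sub>R Z j))\<^sup>2) / real n
       = (norm X)\<^sup>2 + c\<^sup>2 * ((\<Sum>j<n. (norm (Z j))\<^sup>2) / real n)"
proof -
  have "(\<Sum>j<n. X \<bullet> Z j) = 0"
    using assms(2) by (metis inner_sum_right inner_zero_right)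
  moreover have "(\<Sum>j<n. (norm (X - c *\<^sub>R Z j))\<^sup>2)
      = real n * (norm X)\<^sup>2 - 2 * c * (\<Sum>j<n. X \<bullet> Z j) + c\<^sup>2 * (\<Sum>j<n. (norm (Z j))\<^sup>2)"
    by (simp add: norm_diff_sq_expand sum.distrib sum_subtractf sum_distrib_left)
  ultimately show ?thesis
    using assms(1) by (simp add: field_simps)
qed

lemma weighted_sum_sq_dist_eq:
  fixes v :: "nat \<Rightarrow> 'a::real_inner"
  assumes "(\<Sum>k<N. p k) = 1"
  shows "(\<Sum>k<N. p k * (norm (v k - c))\<^sup>2)
       = (\<Sum>k<N. p k * (norm (v k - (\<Sum>j<N. p j *\<^sub>R v j)))\<^sup>2) + (norm ((\<Sum>j<N. p j *\<^sub>R v j) - c))\<^sup>2"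
proof -
  define vb where "vb = (\<Sum>j<N. p j *\<^sub>R v j)"
  have expand: "(norm (v k - c))\<^sup>2 = (norm (v k - vb))\<^sup>2 + 2 * ((v k - vb) \<bullet> (vb - c)) + (norm (vb - c))\<^sup>2" for k
    using dot_norm[of "v k - vb" "vb - c"] by simp
  have "(\<Sum>k<N. p k * ((v k - vb) \<bullet> (vb - c))) = (\<Sum>k<N. p k *\<^sub>R (v k - vb)) \<bullet> (vb - c)"
    by (simp add: inner_sum_left)
  also have "(\<Sum>k<N. p k *\<^sub>R (v k - vb)) = 0"
    using assms by (simp add: vb_def scaleR_diff_right sum_subtractf flip: scaleR_sum_left)
  finally have centered: "(\<Sum>k<N. p k * ((v k - vb) \<bullet> (vb - c))) = 0"
    by simp
  have "(\<Sum>k<N. p k * (norm (v k - c))\<^sup>2) = (\<Sum>k<N. p k * (norm (v k - vb))\<^sup>2)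
      + 2 * (\<Sum>k<N. p k * ((v k - vb) \<bullet> (vb - c))) + (\<Sum>k<N. p k) * (norm (vb - c))\<^sup>2"
  proof -
    have "p k * (norm (v k - c))\<^sup>2 = p k * (norm (v k - vb))\<^sup>2
        + 2 * (p k * ((v k - vb) \<bullet> (vb - c))) + p k * (norm (vb - c))\<^sup>2" for k
      by (simp only: expand) (simp only: algebra_simps)
    then show ?thesis
      by (simp only: sum.distrib sum_distrib_left sum_distrib_right)
  qed
  with centered assms show ?thesis
    by (simp add: vb_def)
qed

lemma norm_weighted_mean_sub_sq_le:
  fixes v :: "nat \<Rightarrow> 'a::real_inner"
  assumes "\<forall>k<N. p k \<ge> 0" "(\<Sum>k<N. p k) = 1"
  shows "(norm ((\<Sum>j<N. p j *\<^sub>R v j) - c))\<^sup>2 \<le> (\<Sum>k<N. p k * (norm (v k - c))\<^sup>2)"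
proof -
  have "0 \<le> (\<Sum>k<N. p k * (norm (v k - (\<Sum>j<N. p j *\<^sub>R v j)))\<^sup>2)"
    using assms(1) by (intro sum_nonneg) auto
  then show ?thesis
    using weighted_sum_sq_dist_eq[OF assms(2), of v c] by linarith
qed

lemma weighted_sum_sq_dist_mean_le:
  fixes v :: "nat \<Rightarrow> 'a::real_inner"
  assumes "(\<Sum>k<N. p k) = 1"
  shows "(\<Sum>k<N. p k * (norm (v k - (\<Sum>j<N. p j *\<^sub>R v j)))\<^sup>2) \<le> (\<Sum>k<N. p k * (norm (v k - c))\<^sup>2)"
  using weighted_sum_sq_dist_eq[OF assms, of v c] by simp

lemma norm_sum_sq_le:
  fixes v :: "nat \<Rightarrow> 'a::real_normed_vector"
  shows "(norm (\<Sum>i<d. v i))\<^sup>2 \<le> real d * (\<Sum>i<d. (norm (v i))\<^sup>2)"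
proof -
  have "(norm (\<Sum>i<d. v i))\<^sup>2 \<le> (\<Sum>i<d. norm (v i))\<^sup>2"
    by (intro power_mono norm_sum) simp
  also have "\<dots> \<le> (\<Sum>i<d. (norm (v i))\<^sup>2) * real d"
    using sum_squared_le_sum_of_squares[of "\<lambda>i. norm (v i)" "{..<d}"] by simp
  finally show ?thesis
    by (simp add: mult.commute)
qed

lemma rate_recursion_step:
  fixes u v beta :: real
  assumes "u \<ge> 2" "0 \<le> beta" "beta \<le> v"
  shows "(1 - 2 / u) * (v / u) + beta / u\<^sup>2 \<le> v / (u + 1)"
proof -
  have "((u - 2) * v + beta) * (u + 1) \<le> ((u - 1) * v) * (u + 1)"
    using assms by (intro mult_right_mono) (auto simp: algebra_simps)
  also have "\<dots> \<le> v * u\<^sup>2"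
    using assms by (simp add: algebra_simps power2_eq_square)
  finally have "((u - 2) * v + beta) / u\<^sup>2 \<le> v / (u + 1)"
    using assms by (simp add: field_simps)
  moreover have "(1 - 2 / u) * (v / u) + beta / u\<^sup>2 = ((u - 2) * v + beta) / u\<^sup>2"
    using assms by (simp add: field_simps power2_eq_square)
  ultimately show ?thesis
    by simp
qed

lemma lipschitz_sq_dist_le:
  fixes R :: "'a::metric_space \<Rightarrow> 'b::real_normed_vector"
  assumes "\<forall>v w. dist (R v) (R w) \<le> LR * dist v w"
  shows "(norm (x - R v))\<^sup>2 \<le> 2 * (norm (x - R w))\<^sup>2 + 2 * LR\<^sup>2 * (dist v w)\<^sup>2"
proof -
  have "dist (R w) (R v) \<le> LR * dist v w"
    using assms by (metis dist_commute)
  then have "(dist (R w) (R v))\<^sup>2 \<le> LR\<^sup>2 * (dist v w)\<^sup>2"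
    by (metis power_mono power_mult_distrib zero_le_dist)
  moreover have "norm (x - R v) \<le> norm (x - R w) + dist (R w) (R v)"
    by (metis dist_norm dist_triangle)
  then have "(norm (x - R v))\<^sup>2 \<le> (norm (x - R w) + dist (R w) (R v))\<^sup>2"
    by (simp add: power_mono)
  moreover have "(norm (x - R w) + dist (R w) (R v))\<^sup>2 \<le> 2 * (norm (x - R w))\<^sup>2 + 2 * (dist (R w) (R v))\<^sup>2"
    using sum_squares_bound[of "norm (x - R w)" "dist (R w) (R v)"]
    by (simp add: power2_sum power2_eq_square algebra_simps)
  ultimately show ?thesis
    by linarith
qed

lemma ennreal_sum_divide_of_nat:
  assumes "\<And>j. j < n \<Longrightarrow> a j \<ge> 0" "n > 0"
  shows "(\<Sum>j<n. ennreal (a j)) / of_nat n = ennreal ((\<Sum>j<n. a j) / real n)"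
proof -
  have "(\<Sum>j<n. ennreal (a j)) = ennreal (\<Sum>j<n. a j)"
    using assms by (intro sum_ennreal) auto
  moreover have "(of_nat n :: ennreal) = ennreal (real n)"
    by (simp add: ennreal_of_nat_eq_real_of_nat)
  ultimately show ?thesis
    using assms by (simp, subst divide_ennreal) (auto intro: sum_nonneg)
qed

lemma gderiv_borel_measurable:
  fixes f :: "'a::euclidean_space \<Rightarrow> real"
  assumes deriv: "\<And>w. GDERIV f w :> G w"
  shows "G \<in> borel_measurable borel"
proof -
  have cont: "continuous_on UNIV f"
    using deriv unfolding gderiv_def
    by (meson continuous_at_imp_continuous_on has_derivative_continuous)
  have "(\<lambda>w. G w \<bullet> b) \<in> borel_measurable borel" if "b \<in> Basis" for b
  proof (rule borel_measurable_LIMSEQ_real)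
    \<comment> \<open>each component of the gradient is a pointwise limit of continuous difference quotients\<close>
    fix w :: 'a
    have "((\<lambda>t. w + t *\<^sub>R b) has_derivative (\<lambda>t. t *\<^sub>R b)) (at 0)"
      by (auto intro!: derivative_eq_intros)
    moreover have "(f has_derivative (\<lambda>h. h \<bullet> G w)) (at (w + 0 *\<^sub>R b))"
      using deriv[of w] unfolding gderiv_def by simp
    ultimately have "((\<lambda>t. f (w + t *\<^sub>R b)) has_derivative (\<lambda>t. (t *\<^sub>R b) \<bullet> G w)) (at 0)"
      by (rule has_derivative_compose)
    then have "((\<lambda>t. f (w + t *\<^sub>R b)) has_real_derivative (b \<bullet> G w)) (at 0)"
      unfolding has_field_derivative_def by (rule has_derivative_eq_rhs) (auto simp: fun_eq_iff)
    then have "((\<lambda>h. (f (w + h *\<^sub>R b) - f w) / h) \<longlongrightarrow> b \<bullet> G w) (at 0)"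
      unfolding DERIV_def by simp
    moreover have "filterlim (\<lambda>n. 1 / real (Suc n)) (at 0) sequentially"
      unfolding filterlim_at using LIMSEQ_Suc[OF lim_inverse_n'] by auto
    ultimately show "(\<lambda>n. (f (w + (1 / real (Suc n)) *\<^sub>R b) - f w) / (1 / real (Suc n)))
        \<longlonglongrightarrow> G w \<bullet> b"
      using filterlim_compose by (fastforce simp: inner_commute)
  next
    fix n
    show "(\<lambda>w. (f (w + (1 / real (Suc n)) *\<^sub>R b) - f w) / (1 / real (Suc n))) \<in> borel_measurable borel"
      by (intro borel_measurable_divide borel_measurable_diff borel_measurable_const
          borel_measurable_continuous_onI continuous_on_compose2[OF cont] continuous_intros) auto
  qed
  then have "(\<lambda>w. \<Sum>b\<in>Basis. (G w \<bullet> b) *\<^sub>R b) \<in> borel_measurable borel"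
    by (intro borel_measurable_sum borel_measurable_scaleR) auto
  then show ?thesis
    by (simp add: euclidean_representation)
qed

lemma ennreal_double_add:
  assumes "0 \<le> x" "0 \<le> y"
  shows "2 * ennreal x + ennreal y = ennreal (2 * x + y)"
  using assms by (simp only: mult_2 add_nonneg_nonneg ennreal_plus[symmetric])

lemma nn_integral_weighted_sum_le:
  assumes "finite I" and nonneg: "\<And>i. i \<in> I \<Longrightarrow> c i \<ge> 0" "\<And>i \<omega>. i \<in> I \<Longrightarrow> f i \<omega> \<ge> 0"
    and [measurable]: "\<And>i. i \<in> I \<Longrightarrow> f i \<in> borel_measurable M"
    and bound: "\<And>i. i \<in> I \<Longrightarrow> (\<integral>\<^sup>+\<omega>. ennreal (f i \<omega>) \<partial>M) \<le> ennreal B" and "B \<ge> 0"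
  shows "(\<integral>\<^sup>+\<omega>. ennreal (\<Sum>i\<in>I. c i * f i \<omega>) \<partial>M) \<le> ennreal ((\<Sum>i\<in>I. c i) * B)"
proof -
  have "(\<integral>\<^sup>+\<omega>. ennreal (\<Sum>i\<in>I. c i * f i \<omega>) \<partial>M) = (\<integral>\<^sup>+\<omega>. (\<Sum>i\<in>I. ennreal (c i) * ennreal (f i \<omega>)) \<partial>M)"
    using nonneg by (intro nn_integral_cong) (simp add: ennreal_mult sum_ennreal[symmetric])
  also have "\<dots> = (\<Sum>i\<in>I. ennreal (c i) * (\<integral>\<^sup>+\<omega>. ennreal (f i \<omega>) \<partial>M))"
    using \<open>finite I\<close> by (subst nn_integral_sum) (auto simp: nn_integral_cmult)
  also have "\<dots> \<le> (\<Sum>i\<in>I. ennreal (c i) * ennreal B)"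
    using bound by (intro sum_mono mult_left_mono) auto
  also have "\<dots> = ennreal ((\<Sum>i\<in>I. c i) * B)"
    using nonneg \<open>B \<ge> 0\<close> by (simp add: sum_distrib_right ennreal_mult sum_ennreal[symmetric])
  finally show ?thesis .
qed

lemma nn_integral_PiM_pmf_of_set_average:
  fixes I :: "'i set" and S :: "'i \<Rightarrow> 'b set" and h :: "('i \<Rightarrow> 'b) \<Rightarrow> ennreal"
  defines "M \<equiv> PiM I (\<lambda>i. measure_pmf (pmf_of_set (S i)))"
  assumes "finite (S c)" "S c \<noteq> {}" "c \<in> I" and h[measurable]: "h \<in> borel_measurable M"
  shows "(\<integral>\<^sup>+\<xi>. h \<xi> \<partial>M) = (\<integral>\<^sup>+\<xi>. (\<Sum>j\<in>S c. h (\<xi>(c:=j))) / of_nat (card (S c)) \<partial>M)"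
proof -
  define MS where "MS = (\<lambda>i. measure_pmf (pmf_of_set (S i)))"
  define M' where "M' = PiM (I - {c}) MS"
  have prob: "\<And>i. prob_space (MS i)"
    unfolding MS_def by (rule prob_space_measure_pmf)
  interpret M': prob_space M'
    unfolding M'_def using prob by (intro prob_space_PiM) auto
  interpret Mc: prob_space "MS c"
    using prob by auto
  interpret P: pair_sigma_finite "MS c" M'
    by unfold_locales
  have insert_c: "insert c (I - {c}) = I"
    using \<open>c \<in> I\<close> by auto
  have distr_eq: "distr (MS c \<Otimes>\<^sub>M M') M (\<lambda>(x, X). X(c := x)) = M"
    using distr_pair_PiM_eq_PiM[of "I - {c}" MS c] prob unfolding insert_c M'_def M_def MS_def by auto
  have [measurable]: "(\<lambda>(x, X). X(c := x)) \<in> measurable (MS c \<Otimes>\<^sub>M M') M"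
  proof -
    have "(\<lambda>y. (snd y)(c := fst y)) \<in> measurable (MS c \<Otimes>\<^sub>M M') M"
      unfolding M'_def M_def MS_def
      by (rule measurable_fun_upd[where J="I - {c}"]) (use \<open>c \<in> I\<close> in auto)
    then show ?thesis
      by (simp add: case_prod_beta')
  qed
  have [measurable]: "(\<lambda>\<xi>. \<xi>(c := j)) \<in> measurable M M" for j
    unfolding M_def by (rule measurable_fun_upd[where J="I"]) (use \<open>c \<in> I\<close> in auto)
  have split: "(\<integral>\<^sup>+\<xi>. F \<xi> \<partial>M) = (\<integral>\<^sup>+X. (\<integral>\<^sup>+x. F (X(c:=x)) \<partial>MS c) \<partial>M')"
    if [measurable]: "F \<in> borel_measurable M" for F
  proof -
    have "(\<integral>\<^sup>+\<xi>. F \<xi> \<partial>M) = (\<integral>\<^sup>+\<xi>. F \<xi> \<partial>distr (MS c \<Otimes>\<^sub>M M') M (\<lambda>(x, X). X(c := x)))"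
      by (simp add: distr_eq)
    also have "\<dots> = (\<integral>\<^sup>+y. F (case y of (x, X) \<Rightarrow> X(c := x)) \<partial>(MS c \<Otimes>\<^sub>M M'))"
      by (rule nn_integral_distr) auto
    also have "\<dots> = (\<integral>\<^sup>+X. (\<integral>\<^sup>+x. F (X(c:=x)) \<partial>MS c) \<partial>M')"
      by (subst P.nn_integral_snd[symmetric]) auto
    finally show ?thesis .
  qed
  have average: "(\<integral>\<^sup>+x. h (X(c:=x)) \<partial>MS c) = (\<Sum>j\<in>S c. h (X(c:=j))) / of_nat (card (S c))" for X
    unfolding MS_def using assms by (subst nn_integral_pmf_of_set) auto
  have "(\<integral>\<^sup>+\<xi>. h \<xi> \<partial>M) = (\<integral>\<^sup>+X. (\<Sum>j\<in>S c. h (X(c:=j))) / of_nat (card (S c)) \<partial>M')"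
    by (subst split) (auto simp: average)
  also have "\<dots> = (\<integral>\<^sup>+X. (\<integral>\<^sup>+x. (\<Sum>j\<in>S c. h ((X(c:=x))(c:=j))) / of_nat (card (S c)) \<partial>MS c) \<partial>M')"
    by (simp add: Mc.emeasure_space_1)
  also have "\<dots> = (\<integral>\<^sup>+\<xi>. (\<Sum>j\<in>S c. h (\<xi>(c:=j))) / of_nat (card (S c)) \<partial>M)"
    by (subst split) auto
  finally show ?thesis .
qed

lemma nn_integral_lipschitz_sq_dist_le:
  fixes R :: "'r \<Rightarrow> 'a::real_normed_vector \<Rightarrow> 'b::real_normed_vector"
  assumes lip: "\<forall>r v w. dist (R r v) (R r w) \<le> LR * dist v w"
    and [measurable]: "(\<lambda>\<omega>. ennreal ((norm (x - R (\<rho> \<omega>) ws))\<^sup>2)) \<in> borel_measurable M"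
      "(\<lambda>\<omega>. ennreal ((norm (V \<omega> - ws))\<^sup>2)) \<in> borel_measurable M"
  shows "(\<integral>\<^sup>+\<omega>. ennreal ((norm (x - R (\<rho> \<omega>) (V \<omega>)))\<^sup>2) \<partial>M)
    \<le> 2 * (\<integral>\<^sup>+\<omega>. ennreal ((norm (x - R (\<rho> \<omega>) ws))\<^sup>2) \<partial>M)
      + ennreal (2 * LR\<^sup>2) * (\<integral>\<^sup>+\<omega>. ennreal ((norm (V \<omega> - ws))\<^sup>2) \<partial>M)"
proof -
  have "(\<integral>\<^sup>+\<omega>. ennreal ((norm (x - R (\<rho> \<omega>) (V \<omega>)))\<^sup>2) \<partial>M)
      \<le> (\<integral>\<^sup>+\<omega>. 2 * ennreal ((norm (x - R (\<rho> \<omega>) ws))\<^sup>2)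
          + ennreal (2 * LR\<^sup>2) * ennreal ((norm (V \<omega> - ws))\<^sup>2) \<partial>M)"
  proof (rule nn_integral_mono)
    fix \<omega>
    have "(norm (x - R (\<rho> \<omega>) (V \<omega>)))\<^sup>2
        \<le> 2 * (norm (x - R (\<rho> \<omega>) ws))\<^sup>2 + 2 * LR\<^sup>2 * (norm (V \<omega> - ws))\<^sup>2"
      using lipschitz_sq_dist_le[of "R (\<rho> \<omega>)" LR x "V \<omega>" ws] lip by (simp add: dist_norm)
    then have "ennreal ((norm (x - R (\<rho> \<omega>) (V \<omega>)))\<^sup>2)
        \<le> ennreal (2 * (norm (x - R (\<rho> \<omega>) ws))\<^sup>2 + 2 * LR\<^sup>2 * (norm (V \<omega> - ws))\<^sup>2)"
      by (rule ennreal_leI)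
    also have "\<dots> = 2 * ennreal ((norm (x - R (\<rho> \<omega>) ws))\<^sup>2)
        + ennreal (2 * LR\<^sup>2) * ennreal ((norm (V \<omega> - ws))\<^sup>2)"
      by (simp add: ennreal_plus ennreal_mult)
    finally show "ennreal ((norm (x - R (\<rho> \<omega>) (V \<omega>)))\<^sup>2) \<le> 2 * ennreal ((norm (x - R (\<rho> \<omega>) ws))\<^sup>2)
        + ennreal (2 * LR\<^sup>2) * ennreal ((norm (V \<omega> - ws))\<^sup>2)" .
  qed
  also have "\<dots> = 2 * (\<integral>\<^sup>+\<omega>. ennreal ((norm (x - R (\<rho> \<omega>) ws))\<^sup>2) \<partial>M)
      + ennreal (2 * LR\<^sup>2) * (\<integral>\<^sup>+\<omega>. ennreal ((norm (V \<omega> - ws))\<^sup>2) \<partial>M)"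
    using assms(2,3) by (simp add: nn_integral_add nn_integral_cmult)
  finally show ?thesis .
qed

lemma (in sigma_finite_measure) AE_pair_measure_fst:
  assumes "AE x in N. P x"
  shows "AE z in N \<Otimes>\<^sub>M M. P (fst z)"
proof -
  from assms obtain A where "A \<in> null_sets N" "{x \<in> space N. \<not> P x} \<subseteq> A"
    by (auto simp: eventually_ae_filter)
  then show ?thesis
    by (intro AE_I'[of "A \<times> space M"]) (auto simp: space_pair_measure)
qed

lemma (in sigma_finite_measure) AE_pair_measure_snd:
  assumes "AE y in M. P y"
  shows "AE z in N \<Otimes>\<^sub>M M. P (snd z)"
proof -
  from assms obtain B where "B \<in> null_sets M" "{y \<in> space M. \<not> P y} \<subseteq> B"
    by (auto simp: eventually_ae_filter)
  then show ?thesis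
    by (intro AE_I'[of "space N \<times> B"]) (auto simp: space_pair_measure)
qed

section \<open>One step of averaged gradient descent\<close>

lemma smooth_grad_norm_sq_le:
  fixes F :: "'a::real_inner \<Rightarrow> real"
  assumes smooth: "\<forall>v u. F v \<le> F u + (v - u) \<bullet> Gr u + L / 2 * (norm (v - u))\<^sup>2"
    and "L > 0" and lower: "\<forall>v. Fs \<le> F v"
  shows "(norm (Gr u))\<^sup>2 \<le> 2 * L * (F u - Fs)"
proof -
  \<comment> \<open>compare with the value after a gradient step of length 1/L\<close>
  define v where "v = u - (1 / L) *\<^sub>R Gr u"
  have "Fs \<le> F v"
    using lower by simp
  also have "\<dots> \<le> F u - (1 / L) * (norm (Gr u))\<^sup>2 + L / 2 * ((1 / L)\<^sup>2 * (norm (Gr u))\<^sup>2)"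
    using smooth[rule_format, where v=v and u=u] \<open>L > 0\<close> by (simp add: v_def power2_norm_eq_inner power_divide)
  also have "\<dots> = F u - (norm (Gr u))\<^sup>2 / (2 * L)"
    using \<open>L > 0\<close> by (simp add: power2_eq_square field_simps)
  finally show ?thesis
    using \<open>L > 0\<close> by (simp add: field_simps)
qed

lemma smooth_convex_value_lower_bound:
  fixes F :: "'a::real_inner \<Rightarrow> real"
  assumes smooth: "\<forall>v u. F v \<le> F u + (v - u) \<bullet> Gr u + L / 2 * (norm (v - u))\<^sup>2"
    and convex: "\<forall>v u. F v \<ge> F u + (v - u) \<bullet> Gr u"
    and lower: "\<forall>v. Fs \<le> F v" and "L > 0" "eta > 0"
  shows "(1 - eta * L) * F u + eta * L * Fs - (norm (u - w))\<^sup>2 / (2 * eta) \<le> F w"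
proof -
  have young: "2 * eta * ((w - u) \<bullet> Gr u) \<ge> - (norm (w - u))\<^sup>2 - eta\<^sup>2 * (norm (Gr u))\<^sup>2"
    using young_inner_le[of eta "w - u" "Gr u"] by simp
  have "eta\<^sup>2 * (norm (Gr u))\<^sup>2 \<le> eta\<^sup>2 * (2 * L * (F u - Fs))"
    using smooth_grad_norm_sq_le[OF smooth \<open>L > 0\<close> lower] by (rule mult_left_mono) simp
  with young have "2 * eta * ((w - u) \<bullet> Gr u)
      \<ge> - (norm (u - w))\<^sup>2 - 2 * eta\<^sup>2 * L * (F u - Fs)"
    by (simp add: norm_minus_commute)
  moreover have "2 * eta * F w \<ge> 2 * eta * F u + 2 * eta * ((w - u) \<bullet> Gr u)"
    using convex[rule_format, where v=w and u=u] \<open>eta > 0\<close> by (simp add: distrib_left[symmetric])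
  ultimately show ?thesis
    using \<open>eta > 0\<close> by (simp add: field_simps power2_eq_square)
qed

lemma weighted_sum_mono:
  assumes "\<forall>k<N. p k \<ge> (0::real)" "\<And>k. k < N \<Longrightarrow> X k \<le> Y k"
  shows "(\<Sum>k<N. p k * X k) \<le> (\<Sum>k<N. p k * Y k)"
  using assms by (intro sum_mono mult_left_mono) auto

lemma weighted_grad_norm_sq_le:
  fixes w :: "nat \<Rightarrow> 'a::real_inner" and F :: "nat \<Rightarrow> 'a \<Rightarrow> real" and Gr :: "nat \<Rightarrow> 'a \<Rightarrow> 'a"
  assumes p_nonneg: "\<forall>k<N. p k \<ge> 0"
    and smooth: "\<forall>k<N. \<forall>v u. F k v \<le> F k u + (v - u) \<bullet> Gr k u + L / 2 * (norm (v - u))\<^sup>2"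
    and lower: "\<forall>k<N. \<forall>v. Fs k \<le> F k v" and "L > 0"
  shows "(\<Sum>k<N. p k * (norm (Gr k (w k)))\<^sup>2) \<le> 2 * L * ((\<Sum>k<N. p k * F k (w k)) - (\<Sum>k<N. p k * Fs k))"
proof -
  have "(\<Sum>k<N. p k * (norm (Gr k (w k)))\<^sup>2) \<le> (\<Sum>k<N. p k * (2 * L * (F k (w k) - Fs k)))"
    by (rule weighted_sum_mono[OF p_nonneg], rule smooth_grad_norm_sq_le[OF _ \<open>L > 0\<close>])
      (use smooth lower in auto)
  also have "\<dots> = (\<Sum>k<N. (2 * L) * (p k * F k (w k)) - (2 * L) * (p k * Fs k))"
    by (rule sum.cong) (simp_all add: algebra_simps)
  also have "\<dots> = 2 * L * ((\<Sum>k<N. p k * F k (w k)) - (\<Sum>k<N. p k * Fs k))"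
    by (simp only: sum_subtractf right_diff_distrib sum_distrib_left)
  finally show ?thesis .
qed

lemma weighted_strongly_convex_inner_ge:
  fixes w :: "nat \<Rightarrow> 'a::real_inner" and F :: "nat \<Rightarrow> 'a \<Rightarrow> real" and Gr :: "nat \<Rightarrow> 'a \<Rightarrow> 'a"
  assumes p_nonneg: "\<forall>k<N. p k \<ge> 0"
    and strongly_convex: "\<forall>k<N. \<forall>v u. F k v \<ge> F k u + (v - u) \<bullet> Gr k u + mu / 2 * (norm (v - u))\<^sup>2"
  shows "(\<Sum>k<N. p k * F k (w k)) - (\<Sum>k<N. p k * F k ws) + mu / 2 * (\<Sum>k<N. p k * (norm (w k - ws))\<^sup>2)
    \<le> (\<Sum>k<N. p k * ((w k - ws) \<bullet> Gr k (w k)))"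
proof -
  have "(\<Sum>k<N. p k * F k (w k)) - (\<Sum>k<N. p k * F k ws) + mu / 2 * (\<Sum>k<N. p k * (norm (w k - ws))\<^sup>2)
      = (\<Sum>k<N. p k * (F k (w k) - F k ws + mu / 2 * (norm (w k - ws))\<^sup>2))"
    by (simp add: sum_subtractf sum.distrib sum_distrib_left algebra_simps)
  also have "\<dots> \<le> (\<Sum>k<N. p k * ((w k - ws) \<bullet> Gr k (w k)))"
  proof (rule weighted_sum_mono[OF p_nonneg])
    fix k assume "k < N"
    then show "F k (w k) - F k ws + mu / 2 * (norm (w k - ws))\<^sup>2 \<le> (w k - ws) \<bullet> Gr k (w k)"
      using strongly_convex[rule_format, where k=k and v=ws and u="w k"]
      by (simp add: inner_diff_left norm_minus_commute)
  qed
  finally show ?thesis .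
qed

lemma weighted_value_gap_le:
  fixes w :: "nat \<Rightarrow> 'a::real_inner" and F :: "nat \<Rightarrow> 'a \<Rightarrow> real" and Gr :: "nat \<Rightarrow> 'a \<Rightarrow> 'a"
  assumes p_nonneg: "\<forall>k<N. p k \<ge> 0"
    and smooth: "\<forall>k<N. \<forall>v u. F k v \<le> F k u + (v - u) \<bullet> Gr k u + L / 2 * (norm (v - u))\<^sup>2"
    and convex: "\<forall>k<N. \<forall>v u. F k v \<ge> F k u + (v - u) \<bullet> Gr k u"
    and lower: "\<forall>k<N. \<forall>v. Fs k \<le> F k v"
    and minimizer: "\<forall>v. (\<Sum>k<N. p k * F k ws) \<le> (\<Sum>k<N. p k * F k v)"
    and "L > 0" "eta > 0" "eta * L \<le> 1"
  shows "(\<Sum>k<N. p k * F k ws) - (\<Sum>k<N. p k * F k (w k))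
    \<le> eta * L * ((\<Sum>k<N. p k * F k ws) - (\<Sum>k<N. p k * Fs k))
      + (\<Sum>k<N. p k * (norm ((\<Sum>j<N. p j *\<^sub>R w j) - w k))\<^sup>2) / (2 * eta)"
proof -
  define wb where "wb = (\<Sum>j<N. p j *\<^sub>R w j)"
  have "(1 - eta * L) * (\<Sum>k<N. p k * F k ws) \<le> (1 - eta * L) * (\<Sum>k<N. p k * F k wb)"
    using minimizer \<open>eta * L \<le> 1\<close> by (intro mult_left_mono) auto
  also have "(1 - eta * L) * (\<Sum>k<N. p k * F k wb) + eta * L * (\<Sum>k<N. p k * Fs k)
      - (\<Sum>k<N. p k * (norm (wb - w k))\<^sup>2) / (2 * eta)
      = (\<Sum>k<N. p k * ((1 - eta * L) * F k wb + eta * L * Fs k - (norm (wb - w k))\<^sup>2 / (2 * eta)))"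
  proof -
    have "(\<Sum>k<N. p k * ((1 - eta * L) * F k wb + eta * L * Fs k - (norm (wb - w k))\<^sup>2 / (2 * eta)))
        = (\<Sum>k<N. (1 - eta * L) * (p k * F k wb) + (eta * L) * (p k * Fs k)
            - (p k * (norm (wb - w k))\<^sup>2) / (2 * eta))"
      by (rule sum.cong) (simp_all add: algebra_simps)
    then show ?thesis
      by (simp only: sum_subtractf sum.distrib sum_distrib_left sum_divide_distrib)
  qed
  also have "\<dots> \<le> (\<Sum>k<N. p k * F k (w k))"
    using smooth convex lower \<open>L > 0\<close> \<open>eta > 0\<close>
    by (intro weighted_sum_mono[OF p_nonneg] smooth_convex_value_lower_bound) auto
  finally show ?thesis
    by (simp add: wb_def algebra_simps)
qed

lemma virtual_step_sq_dist_le: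
  fixes w :: "nat \<Rightarrow> 'a::real_inner" and F :: "nat \<Rightarrow> 'a \<Rightarrow> real" and Gr :: "nat \<Rightarrow> 'a \<Rightarrow> 'a"
  assumes p_nonneg: "\<forall>k<N. p k \<ge> 0" and p_sum: "(\<Sum>k<N. p k) = 1"
    and smooth: "\<forall>k<N. \<forall>v u. F k v \<le> F k u + (v - u) \<bullet> Gr k u + L / 2 * (norm (v - u))\<^sup>2"
    and strongly_convex: "\<forall>k<N. \<forall>v u. F k v \<ge> F k u + (v - u) \<bullet> Gr k u + mu / 2 * (norm (v - u))\<^sup>2"
    and lower: "\<forall>k<N. \<forall>v. Fs k \<le> F k v"
    and minimizer: "\<forall>v. (\<Sum>k<N. p k * F k ws) \<le> (\<Sum>k<N. p k * F k v)"
    and "L > 0" "mu > 0" "eta > 0" "4 * L * eta \<le> 1"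
  shows "(norm ((\<Sum>k<N. p k *\<^sub>R w k) - eta *\<^sub>R (\<Sum>k<N. p k *\<^sub>R Gr k (w k)) - ws))\<^sup>2
     \<le> (1 - mu * eta) * (norm ((\<Sum>k<N. p k *\<^sub>R w k) - ws))\<^sup>2
       + 2 * (\<Sum>k<N. p k * (norm ((\<Sum>j<N. p j *\<^sub>R w j) - w k))\<^sup>2)
       + 6 * L * eta\<^sup>2 * ((\<Sum>k<N. p k * F k ws) - (\<Sum>k<N. p k * Fs k))"
proof -
  define wb where "wb = (\<Sum>k<N. p k *\<^sub>R w k)"
  define gb where "gb = (\<Sum>k<N. p k *\<^sub>R Gr k (w k))"
  define a where "a = (norm (wb - ws))\<^sup>2"
  define b where "b = (\<Sum>k<N. p k * (norm (wb - w k))\<^sup>2)"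
  define c where "c = (\<Sum>k<N. p k * (norm (Gr k (w k)))\<^sup>2)"
  define d where "d = (\<Sum>k<N. p k * (norm (w k - ws))\<^sup>2)"
  define Fw where "Fw = (\<Sum>k<N. p k * F k (w k))"
  define Fst where "Fst = (\<Sum>k<N. p k * F k ws)"
  define Fsm where "Fsm = (\<Sum>k<N. p k * Fs k)"
  define Y where "Y = (\<Sum>k<N. p k * ((wb - w k) \<bullet> Gr k (w k)))"
  define Z where "Z = (\<Sum>k<N. p k * ((w k - ws) \<bullet> Gr k (w k)))"
  have "(wb - ws) \<bullet> gb = Y + Z"
    by (simp add: Y_def Z_def gb_def inner_sum_right inner_diff_left algebra_simps flip: sum.distrib)
  then have expand: "(norm (wb - eta *\<^sub>R gb - ws))\<^sup>2 = a - 2 * eta * Y - 2 * eta * Z + eta\<^sup>2 * (norm gb)\<^sup>2"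
    using norm_diff_sq_expand[of "wb - ws" eta gb] by (simp add: a_def algebra_simps)
  have "- 2 * eta * Y = (\<Sum>k<N. p k * (- 2 * eta * ((wb - w k) \<bullet> Gr k (w k))))"
    by (simp add: Y_def sum_distrib_left algebra_simps)
  also have "\<dots> \<le> (\<Sum>k<N. p k * ((norm (wb - w k))\<^sup>2 + eta\<^sup>2 * (norm (Gr k (w k)))\<^sup>2))"
    by (rule weighted_sum_mono[OF p_nonneg]) (rule young_inner_le)
  also have "\<dots> = b + eta\<^sup>2 * c"
    by (simp add: b_def c_def sum.distrib sum_distrib_left algebra_simps)
  finally have cross: "- 2 * eta * Y \<le> b + eta\<^sup>2 * c" .
  have "2 * eta * (Fw - Fst + mu / 2 * d) \<le> 2 * eta * Z"
    using weighted_strongly_convex_inner_ge[OF p_nonneg strongly_convex, of w ws] \<open>eta > 0\<close>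
    by (simp add: Fw_def Fst_def d_def Z_def)
  then have strong: "- 2 * eta * Z \<le> - 2 * eta * (Fw - Fst) - mu * eta * d"
    by (simp add: algebra_simps)
  have gb_le: "(norm gb)\<^sup>2 \<le> c"
    using norm_weighted_mean_sub_sq_le[OF p_nonneg p_sum, of "\<lambda>k. Gr k (w k)" 0] by (simp add: gb_def c_def)
  have a_le: "a \<le> d"
    using norm_weighted_mean_sub_sq_le[OF p_nonneg p_sum, of w ws] by (simp add: a_def d_def wb_def)
  have c_le: "c \<le> 2 * L * (Fw - Fsm)"
    unfolding c_def Fw_def Fsm_def by (rule weighted_grad_norm_sq_le[OF p_nonneg smooth lower \<open>L > 0\<close>])
  have "4 * (eta * L) \<le> 1" "0 < eta * L"
    using \<open>4 * L * eta \<le> 1\<close> \<open>L > 0\<close> \<open>eta > 0\<close> by (simp_all add: ac_simps)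
  then have "eta * L \<le> 1"
    by linarith
  moreover have "\<forall>k<N. \<forall>v u. F k v \<ge> F k u + (v - u) \<bullet> Gr k u"
  proof (intro allI impI)
    fix k and v u :: 'a assume "k < N"
    have "0 \<le> mu / 2 * (norm (v - u))\<^sup>2"
      using \<open>mu > 0\<close> by simp
    then show "F k v \<ge> F k u + (v - u) \<bullet> Gr k u"
      using strongly_convex[rule_format, where k=k and v=v and u=u] \<open>k < N\<close> by linarith
  qed
  ultimately have value_gap: "Fst - Fw \<le> eta * L * (Fst - Fsm) + b / (2 * eta)"
    using weighted_value_gap_le[OF p_nonneg smooth _ lower minimizer \<open>L > 0\<close> \<open>eta > 0\<close>]
    by (simp add: Fst_def Fw_def Fsm_def b_def wb_def)
  have gap_nonneg: "Fsm \<le> Fst"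
    unfolding Fsm_def Fst_def using lower by (intro weighted_sum_mono[OF p_nonneg]) auto
  have b_nonneg: "b \<ge> 0"
    unfolding b_def using p_nonneg by (intro sum_nonneg) auto
  have step_nonneg: "2 * eta - 4 * L * eta\<^sup>2 \<ge> 0"
    using \<open>eta > 0\<close> \<open>4 * L * eta \<le> 1\<close> by (simp add: power2_eq_square mult_left_le)
  have "(norm (wb - eta *\<^sub>R gb - ws))\<^sup>2 \<le> (1 - mu * eta) * a + b + 4 * L * eta\<^sup>2 * (Fw - Fsm) + 2 * eta * (Fst - Fw)"
  proof -
    have "eta\<^sup>2 * (norm gb)\<^sup>2 \<le> eta\<^sup>2 * c" "mu * eta * a \<le> mu * eta * d"
      "2 * eta\<^sup>2 * c \<le> 2 * eta\<^sup>2 * (2 * L * (Fw - Fsm))"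
      using gb_le a_le c_le \<open>mu > 0\<close> \<open>eta > 0\<close> by (simp_all add: mult_left_mono)
    then show ?thesis
      using expand cross strong by (simp add: algebra_simps)
  qed
  also have "\<dots> = (1 - mu * eta) * a + b + (2 * eta - 4 * L * eta\<^sup>2) * (Fst - Fw) + 4 * L * eta\<^sup>2 * (Fst - Fsm)"
    by (simp add: algebra_simps)
  also have "\<dots> \<le> (1 - mu * eta) * a + b + (2 * eta - 4 * L * eta\<^sup>2) * (eta * L * (Fst - Fsm) + b / (2 * eta))
      + 4 * L * eta\<^sup>2 * (Fst - Fsm)"
    using value_gap step_nonneg by (simp add: mult_left_mono)
  also have "\<dots> \<le> (1 - mu * eta) * a + 2 * b + 6 * L * eta\<^sup>2 * (Fst - Fsm)"
  proof -
    have "(2 * eta - 4 * L * eta\<^sup>2) * (eta * L * (Fst - Fsm) + b / (2 * eta))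
        = 2 * L * eta\<^sup>2 * (Fst - Fsm) + b - 4 * L\<^sup>2 * eta ^ 3 * (Fst - Fsm) - 2 * L * eta * b"
      using \<open>eta > 0\<close> by (simp add: field_simps power2_eq_square power3_eq_cube)
    moreover have "4 * L\<^sup>2 * eta ^ 3 * (Fst - Fsm) \<ge> 0" "2 * L * eta * b \<ge> 0"
      using \<open>L > 0\<close> \<open>eta > 0\<close> gap_nonneg b_nonneg by auto
    ultimately show ?thesis
      by (simp add: algebra_simps)
  qed
  finally show ?thesis
    by (simp add: wb_def gb_def a_def b_def Fst_def Fsm_def)
qed

section \<open>The FedAvg process\<close>

lemma fedavg_w_cong:
  assumes "\<forall>s<t. \<forall>j<N. xi s j = xi' s j" "k < N"
  shows "fedavg_w p N E eta sg w1 xi t k = fedavg_w p N E eta sg w1 xi' t k"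
  using assms
proof (induction t arbitrary: k)
  case (Suc t)
  then have "\<And>k. k < N \<Longrightarrow> fedavg_w p N E eta sg w1 xi t k = fedavg_w p N E eta sg w1 xi' t k"
    and "\<And>j. j < N \<Longrightarrow> xi t j = xi' t j"
    by auto
  with Suc.prems(2) show ?case
    by (auto simp: Let_def intro!: sum.cong)
qed simp

type_synonym ('a, 'r) sample_point = "'a \<times> (nat \<times> nat \<Rightarrow> nat) \<times> 'r"

locale fedavg =
  fixes p :: "nat \<Rightarrow> real" and N E :: nat and D :: "nat \<Rightarrow> 'z list"
    and ell :: "'a::euclidean_space \<Rightarrow> 'z \<Rightarrow> real" and g :: "'a \<Rightarrow> 'z \<Rightarrow> 'a"
    and L mu :: real and wstar :: 'a and W1 :: "'a measure" and Q :: "'r measure"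
  assumes p_nonneg: "\<forall>k<N. p k \<ge> 0"
    and p_sum: "(\<Sum>k<N. p k) = 1"
    and E_pos: "E \<ge> 1"
    and D_nonempty: "\<forall>k<N. D k \<noteq> []"
    and grad: "\<forall>k<N. \<forall>j<length (D k). \<forall>w. GDERIV (\<lambda>v. ell v (D k ! j)) w :> g w (D k ! j)"
    and smooth: "\<forall>k<N. \<forall>v w. local_obj ell D k v \<le> local_obj ell D k w
               + (v - w) \<bullet> local_grad g D k w + L / 2 * (norm (v - w))\<^sup>2"
    and mu_pos: "mu > 0"
    and strongly_convex: "\<forall>k<N. \<forall>v w. local_obj ell D k v \<ge> local_obj ell D k w
               + (v - w) \<bullet> local_grad g D k w + mu / 2 * (norm (v - w))\<^sup>2"
    and wstar_min: "\<forall>w. global_obj p N ell D wstar \<le> global_obj p N ell D w"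
    and W1_prob: "prob_space W1" and W1_sets: "sets W1 = sets borel"
    and Q_prob: "prob_space Q"
begin

definition "n k = length (D k)"
definition "gam = max (8 * L / mu) (real E)"
definition "eta = (\<lambda>s. 2 / (mu * (gam + real s)))"
definition "sample_grad = (\<lambda>k w j. g w (D k ! j))"
definition "Idx = (UNIV :: nat set) \<times> {..<N}"
definition "Msample = (\<lambda>tk. measure_pmf (pmf_of_set {..<length (D (snd tk))}))"
definition "Omega = fedavg_space W1 N D Q"
definition "w_iter t k \<omega> = fedavg_w p N E eta sample_grad (fst \<omega>) (\<lambda>s k. fst (snd \<omega>) (s, k)) t k"

text \<open>The iterates W are those of w_iter with every sample index outside the range of its
  uniform distribution (a null set) replaced by 0; this keeps every sampled gradient measurable
  and lets the resampling identities below hold pointwise rather than almost everywhere.\<close>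

definition "idx \<omega> = (\<lambda>s k. if k < N \<and> fst (snd \<omega>) (s, k) < n k then fst (snd \<omega>) (s, k) else 0)"
definition "W t k \<omega> = fedavg_w p N E eta sample_grad (fst \<omega>) (idx \<omega>) t k"
definition "Wbar t \<omega> = (\<Sum>k<N. p k *\<^sub>R W t k \<omega>)"
definition "sgrad t k \<omega> = g (W t k \<omega>) (D k ! idx \<omega> t k)"
definition "fgrad t k \<omega> = local_grad g D k (W t k \<omega>)"
definition "virtual_gap t \<omega> = Wbar t \<omega> - eta t *\<^sub>R (\<Sum>k<N. p k *\<^sub>R fgrad t k \<omega>) - wstar"
definition "resample c j \<omega> = (fst \<omega>, ((fst (snd \<omega>))(c := j), snd (snd \<omega>)))"

lemma Omega_eq: "Omega = W1 \<Otimes>\<^sub>M (PiM Idx Msample \<Otimes>\<^sub>M Q)"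
  unfolding Omega_def fedavg_space_def Idx_def Msample_def ..

lemma prob_space_Msample: "prob_space (Msample i)"
  by (simp add: Msample_def prob_space_measure_pmf)

lemma prob_space_Omega: "prob_space Omega"
  unfolding Omega_eq
  by (intro prob_space_pair W1_prob Q_prob prob_space_PiM prob_space_Msample)

lemma n_pos: "k < N \<Longrightarrow> n k > 0"
  using D_nonempty by (auto simp: n_def)

lemma idx_less: "k < N \<Longrightarrow> idx \<omega> s k < n k"
  using n_pos by (auto simp: idx_def)

lemma idx_measurable[measurable]: "(\<lambda>\<omega>. idx \<omega> s k) \<in> measurable Omega (count_space UNIV)"
proof (cases "k < N")
  case True
  have "(\<lambda>\<omega>. fst (snd \<omega>) (s, k)) \<in> measurable Omega (count_space UNIV)"
    unfolding Omega_eq using True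
    by (intro measurable_compose[OF measurable_snd] measurable_compose[OF measurable_fst]
        measurable_compose[OF measurable_component_singleton]) (auto simp: Idx_def Msample_def)
  then have "(\<lambda>\<omega>. (\<lambda>i. if i < n k then i else 0) (fst (snd \<omega>) (s, k))) \<in> measurable Omega (count_space UNIV)"
    by (rule measurable_compose) simp
  with True show ?thesis
    by (simp add: idx_def)
qed (simp add: idx_def)

lemma sample_grad_measurable: "k < N \<Longrightarrow> j < n k \<Longrightarrow> (\<lambda>w. g w (D k ! j)) \<in> borel_measurable borel"
  using grad by (intro gderiv_borel_measurable[of "\<lambda>v. ell v (D k ! j)"]) (auto simp: n_def)

lemma local_grad_measurable: "k < N \<Longrightarrow> local_grad g D k \<in> borel_measurable borel"
  unfolding local_grad_def
  by (intro borel_measurable_scaleR borel_measurable_const borel_measurable_sum sample_grad_measurable)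
    (auto simp: n_def)

lemma initial_model_measurable[measurable]: "fst \<in> borel_measurable Omega"
proof -
  have "fst \<in> measurable Omega W1"
    unfolding Omega_eq by (rule measurable_fst)
  then show ?thesis
    by (simp add: W1_sets cong: measurable_cong_sets)
qed

lemma sampled_grad_measurable:
  assumes "k < N" and [measurable]: "F \<in> borel_measurable Omega"
  shows "(\<lambda>\<omega>. g (F \<omega>) (D k ! idx \<omega> s k)) \<in> borel_measurable Omega"
proof -
  let ?f = "\<lambda>j \<omega>. g (F \<omega>) (D k ! (if j < n k then j else 0))"
  have "(\<lambda>\<omega>. ?f (idx \<omega> s k) \<omega>) \<in> borel_measurable Omega"
  proof (rule measurable_compose_countable[OF _ idx_measurable])
    fix j
    have "(\<lambda>w. g w (D k ! (if j < n k then j else 0))) \<in> borel_measurable borel"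
      using sample_grad_measurable[OF \<open>k < N\<close>] n_pos[OF \<open>k < N\<close>] by auto
    then show "?f j \<in> borel_measurable Omega"
      by measurable
  qed
  moreover have "?f (idx \<omega> s k) \<omega> = g (F \<omega>) (D k ! idx \<omega> s k)" for \<omega>
    using idx_less[OF \<open>k < N\<close>, of \<omega> s] by simp
  ultimately show ?thesis
    by simp
qed

lemma W_measurable[measurable]: "k < N \<Longrightarrow> W t k \<in> borel_measurable Omega"
proof (induction t arbitrary: k)
  case (Suc t)
  have step: "(\<lambda>\<omega>. W t k \<omega> - eta t *\<^sub>R g (W t k \<omega>) (D k ! idx \<omega> t k)) \<in> borel_measurable Omega"
    if "k < N" for k
    using that by (intro borel_measurable_diff borel_measurable_scaleR borel_measurable_const
        sampled_grad_measurable Suc.IH)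
  have eq: "W (Suc t) k = (if t = 0 then fst else if Suc t mod E = 0 then
      (\<lambda>\<omega>. \<Sum>j<N. p j *\<^sub>R (W t j \<omega> - eta t *\<^sub>R g (W t j \<omega>) (D j ! idx \<omega> t j)))
      else (\<lambda>\<omega>. W t k \<omega> - eta t *\<^sub>R g (W t k \<omega>) (D k ! idx \<omega> t k)))"
    by (auto simp: W_def sample_grad_def Let_def fun_eq_iff)
  show ?case
    unfolding eq using Suc.prems step by (auto intro!: borel_measurable_sum borel_measurable_scaleR)
next
  case 0
  show ?case
    using initial_model_measurable by (simp add: W_def[abs_def])
qed

lemma fgrad_measurable[measurable]: "k < N \<Longrightarrow> fgrad t k \<in> borel_measurable Omega"
  unfolding fgrad_def using measurable_compose[OF W_measurable local_grad_measurable] by blast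

lemma sgrad_measurable[measurable]: "k < N \<Longrightarrow> sgrad t k \<in> borel_measurable Omega"
  unfolding sgrad_def by (intro sampled_grad_measurable W_measurable)

lemma Wbar_measurable[measurable]: "Wbar t \<in> borel_measurable Omega"
  unfolding Wbar_def by (intro borel_measurable_sum borel_measurable_scaleR borel_measurable_const W_measurable) auto

lemma virtual_gap_measurable[measurable]: "virtual_gap t \<in> borel_measurable Omega"
  unfolding virtual_gap_def
  by (intro borel_measurable_diff borel_measurable_scaleR borel_measurable_sum
      borel_measurable_const Wbar_measurable fgrad_measurable) auto

lemma nn_integral_Omega:
  assumes F[measurable]: "F \<in> borel_measurable Omega"
  shows "(\<integral>\<^sup>+\<omega>. F \<omega> \<partial>Omega) = (\<integral>\<^sup>+w. (\<integral>\<^sup>+r. (\<integral>\<^sup>+\<xi>. F (w, (\<xi>, r)) \<partial>PiM Idx Msample) \<partial>Q) \<partial>W1)"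
proof -
  interpret W1: prob_space W1 by (rule W1_prob)
  interpret Q: prob_space Q by (rule Q_prob)
  interpret X: prob_space "PiM Idx Msample" by (intro prob_space_PiM prob_space_Msample)
  interpret XQ: pair_sigma_finite "PiM Idx Msample" Q by unfold_locales
  have F': "F \<in> borel_measurable (W1 \<Otimes>\<^sub>M (PiM Idx Msample \<Otimes>\<^sub>M Q))"
    using F unfolding Omega_eq .
  have "(\<integral>\<^sup>+\<omega>. F \<omega> \<partial>Omega) = (\<integral>\<^sup>+w. (\<integral>\<^sup>+y. F (w, y) \<partial>(PiM Idx Msample \<Otimes>\<^sub>M Q)) \<partial>W1)"
    unfolding Omega_eq by (rule sigma_finite_measure.nn_integral_fst[symmetric, OF _ F']) unfold_locales
  also have "\<dots> = (\<integral>\<^sup>+w. (\<integral>\<^sup>+r. (\<integral>\<^sup>+\<xi>. F (w, (\<xi>, r)) \<partial>PiM Idx Msample) \<partial>Q) \<partial>W1)"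
  proof (rule nn_integral_cong)
    fix w assume "w \<in> space W1"
    then have "(\<lambda>y. F (w, y)) \<in> borel_measurable (PiM Idx Msample \<Otimes>\<^sub>M Q)"
      using F' by simp
    then show "(\<integral>\<^sup>+y. F (w, y) \<partial>(PiM Idx Msample \<Otimes>\<^sub>M Q)) = (\<integral>\<^sup>+r. (\<integral>\<^sup>+\<xi>. F (w, (\<xi>, r)) \<partial>PiM Idx Msample) \<partial>Q)"
      by (subst XQ.nn_integral_snd[symmetric]) auto
  qed
  finally show ?thesis .
qed

lemma resample_measurable[measurable]: "c \<in> Idx \<Longrightarrow> resample c j \<in> measurable Omega Omega"
  unfolding resample_def Omega_eq
  by (intro measurable_Pair measurable_fst measurable_compose[OF measurable_snd measurable_snd]
      measurable_fun_upd[where J=Idx] measurable_compose[OF measurable_snd measurable_fst])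
    (auto simp: Msample_def)

lemma nn_integral_resample:
  assumes "m < N" and f[measurable]: "f \<in> borel_measurable Omega"
  shows "(\<integral>\<^sup>+\<omega>. f \<omega> \<partial>Omega) = (\<integral>\<^sup>+\<omega>. (\<Sum>j<n m. f (resample (t, m) j \<omega>)) / of_nat (n m) \<partial>Omega)"
proof -
  have c: "(t, m) \<in> Idx"
    using \<open>m < N\<close> by (simp add: Idx_def)
  have [measurable]: "(\<lambda>\<omega>. (\<Sum>j<n m. f (resample (t, m) j \<omega>)) / of_nat (n m)) \<in> borel_measurable Omega"
    using c by measurable
  have "(\<integral>\<^sup>+\<omega>. f \<omega> \<partial>Omega) = (\<integral>\<^sup>+w. (\<integral>\<^sup>+r. (\<integral>\<^sup>+\<xi>. f (w, (\<xi>, r)) \<partial>PiM Idx Msample) \<partial>Q) \<partial>W1)"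
    by (rule nn_integral_Omega[OF f])
  also have "\<dots> = (\<integral>\<^sup>+w. (\<integral>\<^sup>+r. (\<integral>\<^sup>+\<xi>. (\<Sum>j<n m. f (resample (t, m) j (w, (\<xi>, r)))) / of_nat (n m)
      \<partial>PiM Idx Msample) \<partial>Q) \<partial>W1)"
  proof (rule nn_integral_cong, rule nn_integral_cong)
    fix w r assume "w \<in> space W1" "r \<in> space Q"
    then have "(\<lambda>\<xi>. f (w, (\<xi>, r))) \<in> borel_measurable (PiM Idx Msample)"
      using f unfolding Omega_eq by simp
    then show "(\<integral>\<^sup>+\<xi>. f (w, (\<xi>, r)) \<partial>PiM Idx Msample)
        = (\<integral>\<^sup>+\<xi>. (\<Sum>j<n m. f (resample (t, m) j (w, (\<xi>, r)))) / of_nat (n m) \<partial>PiM Idx Msample)"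
      unfolding Msample_def
      using nn_integral_PiM_pmf_of_set_average[of "\<lambda>i. {..<length (D (snd i))}" "(t, m)" Idx
          "\<lambda>\<xi>. f (w, (\<xi>, r))"] c n_pos[OF \<open>m < N\<close>] by (auto simp: n_def resample_def)
  qed
  also have "\<dots> = (\<integral>\<^sup>+\<omega>. (\<Sum>j<n m. f (resample (t, m) j \<omega>)) / of_nat (n m) \<partial>Omega)"
    by (rule nn_integral_Omega[symmetric]) measurable
  finally show ?thesis .
qed

lemma idx_resample:
  "m < N \<Longrightarrow> j < n m \<Longrightarrow> idx (resample (t, m) j \<omega>) s k = (if (s, k) = (t, m) then j else idx \<omega> s k)"
  by (auto simp: idx_def resample_def)

lemma W_resample:
  assumes "m < N" "j < n m" "s \<le> t" "k < N"
  shows "W s k (resample (t, m) j \<omega>) = W s k \<omega>"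
proof -
  have "fedavg_w p N E eta sample_grad (fst \<omega>) (idx (resample (t, m) j \<omega>)) s k
      = fedavg_w p N E eta sample_grad (fst \<omega>) (idx \<omega>) s k"
    by (rule fedavg_w_cong) (use assms in \<open>auto simp: idx_resample\<close>)
  then show ?thesis
    by (simp add: W_def resample_def)
qed

lemma Wbar_resample: "m < N \<Longrightarrow> j < n m \<Longrightarrow> s \<le> t \<Longrightarrow> Wbar s (resample (t, m) j \<omega>) = Wbar s \<omega>"
  unfolding Wbar_def by (rule sum.cong) (auto simp: W_resample)

lemma fgrad_resample: "m < N \<Longrightarrow> j < n m \<Longrightarrow> k < N \<Longrightarrow> fgrad t k (resample (t, m) j \<omega>) = fgrad t k \<omega>"
  by (simp add: fgrad_def W_resample)

lemma sgrad_resample: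
  "m < N \<Longrightarrow> j < n m \<Longrightarrow> k < N \<Longrightarrow>
    sgrad t k (resample (t, m) j \<omega>) = (if k = m then g (W t k \<omega>) (D k ! j) else sgrad t k \<omega>)"
  by (simp add: sgrad_def W_resample idx_resample)

lemma virtual_gap_resample: "m < N \<Longrightarrow> j < n m \<Longrightarrow> virtual_gap t (resample (t, m) j \<omega>) = virtual_gap t \<omega>"
  unfolding virtual_gap_def by (auto simp: Wbar_resample fgrad_resample intro!: sum.cong arg_cong2[where f=scaleR])

definition "grad_var t m \<omega> = (\<Sum>j<n m. (norm (g (W t m \<omega>) (D m ! j) - fgrad t m \<omega>))\<^sup>2) / real (n m)"

lemma grad_var_measurable[measurable]:
  assumes "m < N"
  shows "grad_var t m \<in> borel_measurable Omega"
proof -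
  have "(\<lambda>\<omega>. g (W t m \<omega>) (D m ! j)) \<in> borel_measurable Omega" if "j < n m" for j
    using measurable_compose[OF W_measurable[OF \<open>m < N\<close>] sample_grad_measurable[OF \<open>m < N\<close> that]] by simp
  then show ?thesis
    unfolding grad_var_def using \<open>m < N\<close>
    by (intro borel_measurable_divide borel_measurable_sum borel_measurable_const borel_measurable_power
        borel_measurable_norm borel_measurable_diff fgrad_measurable) auto
qed

lemma sample_grad_sum_centered: "k < N \<Longrightarrow> (\<Sum>j<n k. g (W t k \<omega>) (D k ! j) - fgrad t k \<omega>) = 0"
  using n_pos[of k] by (simp add: sum_subtractf fgrad_def local_grad_def n_def sum_constant_scaleR)

text \<open>Resampling the index of device m at step t averages the sampled gradient of that device
  over its dataset, while everything computed before that draw stays fixed.\<close>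

lemma nn_integral_sq_norm_sub_noise_eq:
  assumes "m < N" and X[measurable]: "X \<in> borel_measurable Omega"
    and X_inv: "\<And>j \<omega>. j < n m \<Longrightarrow> X (resample (t, m) j \<omega>) = X \<omega>"
  shows "(\<integral>\<^sup>+\<omega>. ennreal ((norm (X \<omega> - c *\<^sub>R (sgrad t m \<omega> - fgrad t m \<omega>)))\<^sup>2) \<partial>Omega)
       = (\<integral>\<^sup>+\<omega>. ennreal ((norm (X \<omega>))\<^sup>2) + ennreal (c\<^sup>2) * ennreal (grad_var t m \<omega>) \<partial>Omega)"
proof -
  have [measurable]: "sgrad t m \<in> borel_measurable Omega" "fgrad t m \<in> borel_measurable Omega"
    using \<open>m < N\<close> by measurable
  have "(\<integral>\<^sup>+\<omega>. ennreal ((norm (X \<omega> - c *\<^sub>R (sgrad t m \<omega> - fgrad t m \<omega>)))\<^sup>2) \<partial>Omega)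
      = (\<integral>\<^sup>+\<omega>. (\<Sum>j<n m. ennreal ((norm (X \<omega> - c *\<^sub>R (g (W t m \<omega>) (D m ! j) - fgrad t m \<omega>)))\<^sup>2))
          / of_nat (n m) \<partial>Omega)"
    (is "_ = (\<integral>\<^sup>+\<omega>. ?avg \<omega> \<partial>Omega)")
  proof -
    have "(\<integral>\<^sup>+\<omega>. ennreal ((norm (X \<omega> - c *\<^sub>R (sgrad t m \<omega> - fgrad t m \<omega>)))\<^sup>2) \<partial>Omega)
        = (\<integral>\<^sup>+\<omega>. (\<Sum>j<n m. ennreal ((norm (X (resample (t, m) j \<omega>)
            - c *\<^sub>R (sgrad t m (resample (t, m) j \<omega>) - fgrad t m (resample (t, m) j \<omega>))))\<^sup>2))
          / of_nat (n m) \<partial>Omega)"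
      by (rule nn_integral_resample[OF \<open>m < N\<close>]) measurable
    also have "\<dots> = (\<integral>\<^sup>+\<omega>. ?avg \<omega> \<partial>Omega)"
      by (intro nn_integral_cong arg_cong2[where f="(/)"] sum.cong)
        (auto simp: X_inv sgrad_resample fgrad_resample \<open>m < N\<close>)
    finally show ?thesis .
  qed
  also have "\<dots> = (\<integral>\<^sup>+\<omega>. ennreal ((norm (X \<omega>))\<^sup>2) + ennreal (c\<^sup>2) * ennreal (grad_var t m \<omega>) \<partial>Omega)"
  proof (rule nn_integral_cong)
    fix \<omega>
    have "?avg \<omega> = ennreal ((\<Sum>j<n m. (norm (X \<omega> - c *\<^sub>R (g (W t m \<omega>) (D m ! j) - fgrad t m \<omega>)))\<^sup>2)
        / real (n m))"
      using n_pos[OF \<open>m < N\<close>] by (intro ennreal_sum_divide_of_nat) auto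
    also have "\<dots> = ennreal ((norm (X \<omega>))\<^sup>2 + c\<^sup>2 * grad_var t m \<omega>)"
      unfolding grad_var_def
      by (rule arg_cong[where f=ennreal], rule mean_sq_norm_diff_centered)
        (use n_pos[OF \<open>m < N\<close>] sample_grad_sum_centered[OF \<open>m < N\<close>, of t \<omega>] in simp_all)
    also have "\<dots> = ennreal ((norm (X \<omega>))\<^sup>2) + ennreal (c\<^sup>2) * ennreal (grad_var t m \<omega>)"
      by (simp add: grad_var_def ennreal_plus sum_nonneg flip: ennreal_mult)
    finally show "?avg \<omega> = ennreal ((norm (X \<omega>))\<^sup>2) + ennreal (c\<^sup>2) * ennreal (grad_var t m \<omega>)" .
  qed
  finally show ?thesis .
qed

lemma nn_integral_sq_norm_sub_noise:
  assumes "m < N" and X[measurable]: "X \<in> borel_measurable Omega"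
    and X_inv: "\<And>j \<omega>. j < n m \<Longrightarrow> X (resample (t, m) j \<omega>) = X \<omega>"
  shows "(\<integral>\<^sup>+\<omega>. ennreal ((norm (X \<omega> - c *\<^sub>R (sgrad t m \<omega> - fgrad t m \<omega>)))\<^sup>2) \<partial>Omega)
       = (\<integral>\<^sup>+\<omega>. ennreal ((norm (X \<omega>))\<^sup>2) \<partial>Omega)
         + ennreal (c\<^sup>2) * (\<integral>\<^sup>+\<omega>. ennreal ((norm (sgrad t m \<omega> - fgrad t m \<omega>))\<^sup>2) \<partial>Omega)"
proof -
  have [measurable]: "grad_var t m \<in> borel_measurable Omega"
    using \<open>m < N\<close> by measurable
  have "(\<integral>\<^sup>+\<omega>. ennreal ((norm (sgrad t m \<omega> - fgrad t m \<omega>))\<^sup>2) \<partial>Omega) = (\<integral>\<^sup>+\<omega>. ennreal (grad_var t m \<omega>) \<partial>Omega)"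
    using nn_integral_sq_norm_sub_noise_eq[OF \<open>m < N\<close>, where X="\<lambda>_. 0" and c="- 1"] by simp
  then show ?thesis
    by (simp add: nn_integral_sq_norm_sub_noise_eq[OF assms] nn_integral_add nn_integral_cmult)
qed

lemma nn_integral_sq_norm_sub_noise_sum:
  assumes "m \<le> N"
  shows "(\<integral>\<^sup>+\<omega>. ennreal ((norm (virtual_gap t \<omega> - eta t *\<^sub>R (\<Sum>k<m. p k *\<^sub>R (sgrad t k \<omega> - fgrad t k \<omega>))))\<^sup>2) \<partial>Omega)
       = (\<integral>\<^sup>+\<omega>. ennreal ((norm (virtual_gap t \<omega>))\<^sup>2) \<partial>Omega)
         + (\<Sum>k<m. ennreal ((eta t * p k)\<^sup>2) * (\<integral>\<^sup>+\<omega>. ennreal ((norm (sgrad t k \<omega> - fgrad t k \<omega>))\<^sup>2) \<partial>Omega))"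
  using assms
proof (induction m)
  case (Suc m)
  then have "m < N"
    by simp
  define X where "X \<omega> = virtual_gap t \<omega> - eta t *\<^sub>R (\<Sum>k<m. p k *\<^sub>R (sgrad t k \<omega> - fgrad t k \<omega>))"
    for \<omega> :: "('a, 'r) sample_point"
  have [measurable]: "X \<in> borel_measurable Omega"
    unfolding X_def using \<open>m < N\<close>
    by (intro borel_measurable_diff borel_measurable_scaleR borel_measurable_sum
        borel_measurable_const virtual_gap_measurable sgrad_measurable fgrad_measurable) auto
  have X_inv: "X (resample (t, m) j \<omega>) = X \<omega>" if "j < n m" for j \<omega>
    unfolding X_def using that \<open>m < N\<close>
    by (auto simp: virtual_gap_resample sgrad_resample fgrad_resample
        intro!: sum.cong arg_cong2[where f="(-)"] arg_cong2[where f=scaleR])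
  have "virtual_gap t \<omega> - eta t *\<^sub>R (\<Sum>k<Suc m. p k *\<^sub>R (sgrad t k \<omega> - fgrad t k \<omega>))
      = X \<omega> - (eta t * p m) *\<^sub>R (sgrad t m \<omega> - fgrad t m \<omega>)" for \<omega>
    by (simp add: X_def algebra_simps)
  then have "(\<integral>\<^sup>+\<omega>. ennreal ((norm (virtual_gap t \<omega> - eta t *\<^sub>R (\<Sum>k<Suc m. p k *\<^sub>R (sgrad t k \<omega> - fgrad t k \<omega>))))\<^sup>2) \<partial>Omega)
      = (\<integral>\<^sup>+\<omega>. ennreal ((norm (X \<omega>))\<^sup>2) \<partial>Omega)
        + ennreal ((eta t * p m)\<^sup>2) * (\<integral>\<^sup>+\<omega>. ennreal ((norm (sgrad t m \<omega> - fgrad t m \<omega>))\<^sup>2) \<partial>Omega)"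
    by (simp add: nn_integral_sq_norm_sub_noise[OF \<open>m < N\<close> _ X_inv])
  with Suc show ?case
    by (simp add: X_def add.assoc)
qed simp

lemma W_1: "W (Suc 0) k \<omega> = fst \<omega>"
  by (simp add: W_def)

lemma Wbar_1: "Wbar (Suc 0) \<omega> = fst \<omega>"
  by (simp add: Wbar_def W_1 p_sum flip: scaleR_sum_left)

lemma W_local_step:
  "s \<ge> 1 \<Longrightarrow> Suc s mod E \<noteq> 0 \<Longrightarrow> W (Suc s) k \<omega> = W s k \<omega> - eta s *\<^sub>R sgrad s k \<omega>"
  by (simp add: W_def sgrad_def sample_grad_def Let_def)

lemma W_sync_step:
  assumes "Suc s mod E = 0"
  shows "W (Suc s) k \<omega> = Wbar (Suc s) \<omega>"
proof (cases "s = 0")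
  case False
  define V where "V = (\<Sum>j<N. p j *\<^sub>R (W s j \<omega> - eta s *\<^sub>R sgrad s j \<omega>))"
  have "\<And>k. W (Suc s) k \<omega> = V"
    using False assms by (simp add: W_def V_def sgrad_def sample_grad_def Let_def)
  then show ?thesis
    by (simp add: Wbar_def p_sum flip: scaleR_sum_left)
qed (simp add: W_1 Wbar_1)

lemma Wbar_Suc: "t \<ge> 1 \<Longrightarrow> Wbar (Suc t) \<omega> = Wbar t \<omega> - eta t *\<^sub>R (\<Sum>k<N. p k *\<^sub>R sgrad t k \<omega>)"
proof -
  assume "t \<ge> 1"
  define v where "v j = W t j \<omega> - eta t *\<^sub>R sgrad t j \<omega>" for j
  have "Wbar (Suc t) \<omega> = (\<Sum>k<N. p k *\<^sub>R v k)"
  proof (cases "Suc t mod E = 0")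
    case True
    then show ?thesis
      using \<open>t \<ge> 1\<close>
      by (simp add: Wbar_def W_def v_def sgrad_def sample_grad_def Let_def p_sum flip: scaleR_sum_left)
  next
    case False
    then show ?thesis
      using \<open>t \<ge> 1\<close> by (simp add: Wbar_def W_local_step v_def)
  qed
  then show ?thesis
    by (simp add: v_def Wbar_def scaleR_diff_right sum_subtractf scaleR_sum_right mult.commute)
qed

lemma Wbar_Suc_sub_wstar:
  "t \<ge> 1 \<Longrightarrow> Wbar (Suc t) \<omega> - wstar = virtual_gap t \<omega> - eta t *\<^sub>R (\<Sum>k<N. p k *\<^sub>R (sgrad t k \<omega> - fgrad t k \<omega>))"
  by (simp add: Wbar_Suc virtual_gap_def scaleR_diff_right sum_subtractf algebra_simps)

lemma W_unroll:
  assumes "t0 \<ge> 1" "\<forall>i<d. Suc (t0 + i) mod E \<noteq> 0"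
  shows "W (t0 + d) k \<omega> = W t0 k \<omega> - (\<Sum>i<d. eta (t0 + i) *\<^sub>R sgrad (t0 + i) k \<omega>)"
  using assms by (induction d) (simp_all add: W_local_step)

text \<open>The initial model at step 1 counts as an averaged one.\<close>

definition "last_sync t = (if t < E then 1 else E * (t div E))"

lemma last_sync_bounds:
  assumes "t \<ge> 1"
  shows "1 \<le> last_sync t" "last_sync t \<le> t" "t - last_sync t \<le> E - 1"
proof -
  have "t - E * (t div E) = t mod E" "t mod E < E" "E * (t div E) \<le> t"
    using E_pos by (simp_all add: minus_mult_div_eq_mod)
  moreover have "\<not> t < E \<Longrightarrow> 1 \<le> E * (t div E)"
    using E_pos by (simp add: div_greater_zero_iff Suc_le_eq)
  ultimately show "1 \<le> last_sync t" "last_sync t \<le> t" "t - last_sync t \<le> E - 1"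
    using assms by (auto simp: last_sync_def)
qed

lemma no_sync_after_last_sync:
  assumes "t \<ge> 1" "i < t - last_sync t"
  shows "Suc (last_sync t + i) mod E \<noteq> 0"
proof (cases "t < E")
  case True
  then have "Suc (last_sync t + i) < E"
    using assms by (simp add: last_sync_def)
  then show ?thesis
    by simp
next
  case False
  have "Suc i < E"
    using last_sync_bounds(3)[OF \<open>t \<ge> 1\<close>] assms(2) by linarith
  moreover have "Suc (last_sync t + i) = Suc i + (t div E) * E"
    using False by (simp add: last_sync_def)
  ultimately show ?thesis
    by (simp only: mod_mult_self1) simp
qed

lemma W_last_sync: "t \<ge> 1 \<Longrightarrow> W (last_sync t) k \<omega> = Wbar (last_sync t) \<omega>"
proof (cases "t < E")
  case False
  assume "t \<ge> 1"
  then obtain s where "last_sync t = Suc s"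
    using last_sync_bounds(1) by (metis Suc_le_D One_nat_def)
  moreover from this have "Suc s mod E = 0"
    using False by (metis last_sync_def mod_mult_self1_is_0 mult.commute)
  ultimately show ?thesis
    by (simp add: W_sync_step)
qed (simp add: last_sync_def W_1 Wbar_1)

lemma gam_ge: "gam \<ge> real E" "gam \<ge> 8 * L / mu" "gam \<ge> 1"
  using E_pos by (auto simp: gam_def)

lemma eta_pos: "eta s > 0"
  using gam_ge(3) mu_pos by (simp add: eta_def)

lemma eta_antimono: "s \<le> s' \<Longrightarrow> eta s' \<le> eta s"
  using gam_ge(3) mu_pos by (simp add: eta_def frac_le mult_left_mono)

lemma eta_last_sync_le: "t \<ge> 1 \<Longrightarrow> eta (last_sync t) \<le> 2 * eta t"
proof -
  assume "t \<ge> 1"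
  then have "real t \<le> real (last_sync t) + (real E - 1)"
    using last_sync_bounds[OF \<open>t \<ge> 1\<close>] E_pos by linarith
  then have "gam + real t \<le> 2 * (gam + real (last_sync t))"
    using gam_ge(1) of_nat_0_le_iff[of "last_sync t", where 'a=real] by argo
  then have "mu * (gam + real t) / 2 \<le> mu * (gam + real (last_sync t))"
    using mult_left_mono[of _ _ mu] mu_pos by fastforce
  then have "2 / (mu * (gam + real (last_sync t))) \<le> 2 / (mu * (gam + real t) / 2)"
    using gam_ge(3) mu_pos by (intro divide_left_mono) auto
  then show ?thesis
    by (simp add: eta_def)
qed

lemma N_pos: "N > 0"
  using p_sum by (cases N) auto

lemma L_ge_mu: "L \<ge> mu"
proof -
  obtain b :: 'a where "b \<in> Basis"
    using nonempty_Basis by blast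
  then have "norm b = 1"
    by simp
  then show ?thesis
    using smooth[rule_format, OF N_pos, where v=b and w=0]
      strongly_convex[rule_format, OF N_pos, where v=b and w=0] by simp
qed

lemma L_pos: "L > 0"
  using L_ge_mu mu_pos by simp

lemma eta_le: "4 * L * eta s \<le> 1" "s \<ge> 1 \<Longrightarrow> mu * eta s \<le> 1"
proof -
  have pos: "mu * (gam + real s) > 0"
    using mu_pos gam_ge(3) by simp
  have "8 * L \<le> mu * gam"
    using gam_ge(2) mu_pos by (simp add: field_simps)
  also have "\<dots> \<le> mu * (gam + real s)"
    using mu_pos by simp
  finally have "8 * L \<le> mu * (gam + real s)" .
  then show "4 * L * eta s \<le> 1"
    using pos by (simp add: eta_def divide_le_eq)
  show "mu * eta s \<le> 1" if "s \<ge> 1"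
  proof -
    have "mu * eta s = 2 / (gam + real s)"
      using mu_pos by (simp add: eta_def)
    also have "\<dots> \<le> 1"
      using that gam_ge(3) by simp
    finally show ?thesis .
  qed
qed

lemma local_obj_bdd_below: "k < N \<Longrightarrow> bdd_below (range (local_obj ell D k))"
proof -
  assume "k < N"
  define a where "a = local_grad g D k 0"
  have "local_obj ell D k 0 - (norm a)\<^sup>2 / (2 * mu) \<le> local_obj ell D k v" for v
  proof -
    have "- 2 * mu * (v \<bullet> a) \<le> (norm a)\<^sup>2 + mu\<^sup>2 * (norm v)\<^sup>2"
      using young_inner_le[of mu a v] by (simp add: inner_commute)
    then have "- (norm a)\<^sup>2 / (2 * mu) \<le> v \<bullet> a + mu / 2 * (norm v)\<^sup>2"
      using mu_pos by (simp add: field_simps power2_eq_square)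
    moreover have "local_obj ell D k v \<ge> local_obj ell D k 0 + v \<bullet> a + mu / 2 * (norm v)\<^sup>2"
      using strongly_convex[rule_format, OF \<open>k < N\<close>, where v=v and w=0] by (simp add: a_def)
    ultimately show ?thesis
      by simp
  qed
  then show ?thesis
    by (intro bdd_belowI2) auto
qed

lemma Inf_local_obj_le: "k < N \<Longrightarrow> Inf (range (local_obj ell D k)) \<le> local_obj ell D k v"
  by (rule cInf_lower) (auto intro: local_obj_bdd_below)

definition "heterogeneity = global_obj p N ell D wstar - (\<Sum>k<N. p k * Inf (range (local_obj ell D k)))"

lemma heterogeneity_nonneg: "heterogeneity \<ge> 0"
  using weighted_sum_mono[OF p_nonneg, of "\<lambda>k. Inf (range (local_obj ell D k))" "\<lambda>k. local_obj ell D k wstar"]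
    Inf_local_obj_le
  by (simp add: heterogeneity_def global_obj_def)

lemma virtual_gap_sq_le:
  "(norm (virtual_gap t \<omega>))\<^sup>2 \<le> (1 - mu * eta t) * (norm (Wbar t \<omega> - wstar))\<^sup>2
      + 2 * (\<Sum>k<N. p k * (norm (Wbar t \<omega> - W t k \<omega>))\<^sup>2) + 6 * L * (eta t)\<^sup>2 * heterogeneity"
  using virtual_step_sq_dist_le[OF p_nonneg p_sum smooth strongly_convex _ _ L_pos mu_pos eta_pos eta_le(1),
      of "\<lambda>k. Inf (range (local_obj ell D k))" wstar "\<lambda>k. W t k \<omega>"]
    Inf_local_obj_le wstar_min
  by (simp add: virtual_gap_def Wbar_def fgrad_def heterogeneity_def global_obj_def)

lemma local_divergence_le:
  assumes "t \<ge> 1"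
  shows "(\<Sum>k<N. p k * (norm (Wbar t \<omega> - W t k \<omega>))\<^sup>2)
    \<le> (\<Sum>(k, i)\<in>{..<N} \<times> {..<t - last_sync t}.
          (p k * (real E - 1) * (eta (last_sync t))\<^sup>2) * (norm (sgrad (last_sync t + i) k \<omega>))\<^sup>2)"
proof -
  define t0 where "t0 = last_sync t"
  define d where "d = t - t0"
  have "t = t0 + d" "real d \<le> real E - 1"
    using last_sync_bounds[OF assms] E_pos by (auto simp: d_def t0_def)
  have "(\<Sum>k<N. p k * (norm (Wbar t \<omega> - W t k \<omega>))\<^sup>2) \<le> (\<Sum>k<N. p k * (norm (W t k \<omega> - Wbar t0 \<omega>))\<^sup>2)"
    using weighted_sum_sq_dist_mean_le[OF p_sum, of "\<lambda>k. W t k \<omega>" "Wbar t0 \<omega>"]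
    by (simp add: Wbar_def norm_minus_commute)
  also have "\<dots> \<le> (\<Sum>k<N. p k * (\<Sum>i<d. (real E - 1) * (eta t0)\<^sup>2 * (norm (sgrad (t0 + i) k \<omega>))\<^sup>2))"
  proof (rule weighted_sum_mono[OF p_nonneg])
    fix k assume "k < N"
    have "W t k \<omega> = W t0 k \<omega> - (\<Sum>i<d. eta (t0 + i) *\<^sub>R sgrad (t0 + i) k \<omega>)"
      unfolding \<open>t = t0 + d\<close> using last_sync_bounds(1)[OF assms] no_sync_after_last_sync[OF assms]
      by (intro W_unroll) (auto simp: t0_def d_def)
    moreover have "W t0 k \<omega> = Wbar t0 \<omega>"
      unfolding t0_def by (rule W_last_sync[OF assms])
    ultimately have "W t k \<omega> - Wbar t0 \<omega> = - (\<Sum>i<d. eta (t0 + i) *\<^sub>R sgrad (t0 + i) k \<omega>)"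
      by simp
    then have "(norm (W t k \<omega> - Wbar t0 \<omega>))\<^sup>2 \<le> real d * (\<Sum>i<d. (norm (eta (t0 + i) *\<^sub>R sgrad (t0 + i) k \<omega>))\<^sup>2)"
      using norm_sum_sq_le by (simp only: norm_minus_cancel)
    also have "\<dots> \<le> (real E - 1) * (\<Sum>i<d. (eta t0)\<^sup>2 * (norm (sgrad (t0 + i) k \<omega>))\<^sup>2)"
    proof (rule mult_mono[OF \<open>real d \<le> real E - 1\<close> sum_mono])
      fix i
      have "(eta (t0 + i))\<^sup>2 \<le> (eta t0)\<^sup>2"
        using eta_antimono[of t0 "t0 + i"] eta_pos by (simp add: power_mono less_imp_le)
      then show "(norm (eta (t0 + i) *\<^sub>R sgrad (t0 + i) k \<omega>))\<^sup>2 \<le> (eta t0)\<^sup>2 * (norm (sgrad (t0 + i) k \<omega>))\<^sup>2"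
        by (simp add: power_mult_distrib mult_right_mono)
    qed (use E_pos in \<open>auto intro: sum_nonneg\<close>)
    finally show "(norm (W t k \<omega> - Wbar t0 \<omega>))\<^sup>2
        \<le> (\<Sum>i<d. (real E - 1) * (eta t0)\<^sup>2 * (norm (sgrad (t0 + i) k \<omega>))\<^sup>2)"
      by (simp add: sum_distrib_left mult.assoc)
  qed
  also have "\<dots> = (\<Sum>(k, i)\<in>{..<N} \<times> {..<d}. (p k * (real E - 1) * (eta t0)\<^sup>2) * (norm (sgrad (t0 + i) k \<omega>))\<^sup>2)"
    by (simp add: sum.cartesian_product sum_distrib_left mult.assoc)
  finally show ?thesis
    by (simp add: t0_def d_def)
qed

lemma AE_sample_idx_eq: "AE \<omega> in Omega. \<forall>s. \<forall>k<N. fst (snd \<omega>) (s, k) = idx \<omega> s k"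
proof -
  interpret Q: prob_space Q by (rule Q_prob)
  interpret X: prob_space "PiM Idx Msample" by (intro prob_space_PiM prob_space_Msample)
  interpret XQ: prob_space "PiM Idx Msample \<Otimes>\<^sub>M Q" by (intro prob_space_pair X.prob_space_axioms Q.prob_space_axioms)
  have "countable Idx"
    unfolding Idx_def by (intro countable_SIGMA) auto
  moreover have "AE x in Msample sk. x < length (D (snd sk))" if "sk \<in> Idx" for sk
  proof -
    have "D (snd sk) \<noteq> []"
      using that D_nonempty by (auto simp: Idx_def)
    then show ?thesis
      unfolding Msample_def by (simp add: AE_measure_pmf_iff lessThan_empty_iff)
  qed
  ultimately have "AE \<xi> in PiM Idx Msample. \<forall>sk\<in>Idx. \<xi> sk < length (D (snd sk))"
    by (intro AE_ball_countable' AE_PiM_component prob_space_Msample)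
  then have "AE z in PiM Idx Msample \<Otimes>\<^sub>M Q. \<forall>sk\<in>Idx. fst z sk < length (D (snd sk))"
    by (rule Q.AE_pair_measure_fst)
  then have "AE \<omega> in Omega. \<forall>sk\<in>Idx. fst (snd \<omega>) sk < length (D (snd sk))"
    unfolding Omega_eq by (rule XQ.AE_pair_measure_snd)
  then show ?thesis
    by (rule eventually_mono) (auto simp: Idx_def idx_def n_def)
qed

lemma AE_w_iter_eq: "AE \<omega> in Omega. \<forall>t. \<forall>k<N. w_iter t k \<omega> = W t k \<omega> \<and> fst (snd \<omega>) (t, k) = idx \<omega> t k"
  using AE_sample_idx_eq by (rule eventually_mono) (auto simp: w_iter_def W_def intro!: fedavg_w_cong)

end

section \<open>Convergence under bounded gradient noise\<close>

locale fedavg_bounded_grad = fedavg +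
  fixes sigma :: "nat \<Rightarrow> real" and G :: real
  assumes iter_grad_variance: "\<forall>k<N. \<forall>s\<ge>1. (\<integral>\<^sup>+\<omega>. ennreal ((norm (g (w_iter s k \<omega>) (D k ! fst (snd \<omega>) (s, k))
        - local_grad g D k (w_iter s k \<omega>)))\<^sup>2) \<partial>Omega) \<le> ennreal ((sigma k)\<^sup>2)"
    and iter_grad_second_moment: "\<forall>k<N. \<forall>s\<ge>1. (\<integral>\<^sup>+\<omega>. ennreal ((norm (g (w_iter s k \<omega>)
        (D k ! fst (snd \<omega>) (s, k))))\<^sup>2) \<partial>Omega) \<le> ennreal (G\<^sup>2)"
begin

lemma grad_variance:
  assumes "k < N" "s \<ge> 1"
  shows "(\<integral>\<^sup>+\<omega>. ennreal ((norm (sgrad s k \<omega> - fgrad s k \<omega>))\<^sup>2) \<partial>Omega) \<le> ennreal ((sigma k)\<^sup>2)"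
proof -
  have "(\<integral>\<^sup>+\<omega>. ennreal ((norm (sgrad s k \<omega> - fgrad s k \<omega>))\<^sup>2) \<partial>Omega)
      = (\<integral>\<^sup>+\<omega>. ennreal ((norm (g (w_iter s k \<omega>) (D k ! fst (snd \<omega>) (s, k))
          - local_grad g D k (w_iter s k \<omega>)))\<^sup>2) \<partial>Omega)"
    using AE_w_iter_eq by (rule nn_integral_cong_AE[OF eventually_mono])
      (use \<open>k < N\<close> in \<open>auto simp: sgrad_def fgrad_def\<close>)
  with iter_grad_variance assms show ?thesis
    by simp
qed

lemma grad_second_moment:
  assumes "k < N" "s \<ge> 1"
  shows "(\<integral>\<^sup>+\<omega>. ennreal ((norm (sgrad s k \<omega>))\<^sup>2) \<partial>Omega) \<le> ennreal (G\<^sup>2)"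
proof -
  have "(\<integral>\<^sup>+\<omega>. ennreal ((norm (sgrad s k \<omega>))\<^sup>2) \<partial>Omega)
      = (\<integral>\<^sup>+\<omega>. ennreal ((norm (g (w_iter s k \<omega>) (D k ! fst (snd \<omega>) (s, k))))\<^sup>2) \<partial>Omega)"
    using AE_w_iter_eq by (rule nn_integral_cong_AE[OF eventually_mono])
      (use \<open>k < N\<close> in \<open>auto simp: sgrad_def\<close>)
  with iter_grad_second_moment assms show ?thesis
    by simp
qed

definition "B = (\<Sum>k<N. (p k)\<^sup>2 * (sigma k)\<^sup>2) + 6 * L * heterogeneity + 8 * (real E - 1)\<^sup>2 * G\<^sup>2"

lemma B_nonneg: "B \<ge> 0"
  unfolding B_def using heterogeneity_nonneg L_pos by (intro add_nonneg_nonneg sum_nonneg) auto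

lemma expected_local_divergence_le:
  assumes "t \<ge> 1"
  shows "(\<integral>\<^sup>+\<omega>. ennreal (\<Sum>k<N. p k * (norm (Wbar t \<omega> - W t k \<omega>))\<^sup>2) \<partial>Omega)
    \<le> ennreal (4 * (eta t)\<^sup>2 * (real E - 1)\<^sup>2 * G\<^sup>2)"
proof -
  define t0 where "t0 = last_sync t"
  define d where "d = t - t0"
  have "real d \<le> real E - 1" "t0 \<ge> 1"
    using last_sync_bounds[OF assms] E_pos by (auto simp: d_def t0_def)
  have "(\<integral>\<^sup>+\<omega>. ennreal (\<Sum>k<N. p k * (norm (Wbar t \<omega> - W t k \<omega>))\<^sup>2) \<partial>Omega)
      \<le> (\<integral>\<^sup>+\<omega>. ennreal (\<Sum>(k, i)\<in>{..<N} \<times> {..<d}.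
          (p k * (real E - 1) * (eta t0)\<^sup>2) * (norm (sgrad (t0 + i) k \<omega>))\<^sup>2) \<partial>Omega)"
    using local_divergence_le[OF assms] by (intro nn_integral_mono ennreal_leI) (simp add: t0_def d_def)
  also have "\<dots> \<le> ennreal ((\<Sum>(k, i)\<in>{..<N} \<times> {..<d}. p k * (real E - 1) * (eta t0)\<^sup>2) * G\<^sup>2)"
    using nn_integral_weighted_sum_le[of "{..<N} \<times> {..<d}" "\<lambda>x. p (fst x) * (real E - 1) * (eta t0)\<^sup>2"
        "\<lambda>x \<omega>. (norm (sgrad (t0 + snd x) (fst x) \<omega>))\<^sup>2" Omega "G\<^sup>2"]
      grad_second_moment \<open>t0 \<ge> 1\<close> p_nonneg E_pos
    by (auto simp: case_prod_beta')
  also have "(\<Sum>(k, i)\<in>{..<N} \<times> {..<d}. p k * (real E - 1) * (eta t0)\<^sup>2) = real d * (real E - 1) * (eta t0)\<^sup>2"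
  proof -
    have "(\<Sum>(k, i)\<in>{..<N} \<times> {..<d}. p k * (real E - 1) * (eta t0)\<^sup>2)
        = (\<Sum>k<N. \<Sum>i<d. p k * ((real E - 1) * (eta t0)\<^sup>2))"
      by (simp only: sum.cartesian_product mult.assoc)
    also have "\<dots> = (\<Sum>k<N. p k) * (real d * (real E - 1) * (eta t0)\<^sup>2)"
      by (auto simp: sum_distrib_right intro!: sum.cong)
    finally show ?thesis
      by (simp add: p_sum)
  qed
  also have "real d * (real E - 1) * (eta t0)\<^sup>2 * G\<^sup>2 \<le> 4 * (eta t)\<^sup>2 * (real E - 1)\<^sup>2 * G\<^sup>2"
  proof -
    have "(eta t0)\<^sup>2 \<le> (2 * eta t)\<^sup>2"
      using eta_last_sync_le[OF assms] eta_pos by (intro power_mono) (auto simp: t0_def less_imp_le)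
    then have "real d * (real E - 1) * (eta t0)\<^sup>2 * G\<^sup>2 \<le> (real E - 1) * (real E - 1) * (2 * eta t)\<^sup>2 * G\<^sup>2"
      using \<open>real d \<le> real E - 1\<close> E_pos by (intro mult_right_mono mult_mono) auto
    then show ?thesis
      by (simp add: power2_eq_square algebra_simps)
  qed
  finally show ?thesis
    by (simp add: ennreal_leI)
qed

lemma expected_virtual_gap_le:
  assumes "t \<ge> 1"
  shows "(\<integral>\<^sup>+\<omega>. ennreal ((norm (virtual_gap t \<omega>))\<^sup>2) \<partial>Omega)
    \<le> ennreal (1 - mu * eta t) * (\<integral>\<^sup>+\<omega>. ennreal ((norm (Wbar t \<omega> - wstar))\<^sup>2) \<partial>Omega)
      + ennreal ((eta t)\<^sup>2 * (6 * L * heterogeneity + 8 * (real E - 1)\<^sup>2 * G\<^sup>2))"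
proof -
  interpret prob_space Omega by (rule prob_space_Omega)
  let ?a = "\<lambda>\<omega>. (norm (Wbar t \<omega> - wstar))\<^sup>2"
  let ?b = "\<lambda>\<omega>. \<Sum>k<N. p k * (norm (Wbar t \<omega> - W t k \<omega>))\<^sup>2"
  have contraction: "1 - mu * eta t \<ge> 0" and "6 * L * (eta t)\<^sup>2 * heterogeneity \<ge> 0"
    using eta_le(2)[OF assms] L_pos heterogeneity_nonneg by simp_all
  have b_nonneg: "?b \<omega> \<ge> 0" for \<omega>
    using p_nonneg by (intro sum_nonneg) auto
  have [measurable]: "(\<lambda>\<omega>. ennreal (?b \<omega>)) \<in> borel_measurable Omega"
    by (intro measurable_compose[OF _ measurable_ennreal] borel_measurable_sum borel_measurable_times
        borel_measurable_const borel_measurable_power borel_measurable_norm borel_measurable_diff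
        Wbar_measurable W_measurable) auto
  have "(\<integral>\<^sup>+\<omega>. ennreal ((norm (virtual_gap t \<omega>))\<^sup>2) \<partial>Omega)
      \<le> (\<integral>\<^sup>+\<omega>. ennreal (1 - mu * eta t) * ennreal (?a \<omega>) + 2 * ennreal (?b \<omega>)
          + ennreal (6 * L * (eta t)\<^sup>2 * heterogeneity) \<partial>Omega)"
  proof (rule nn_integral_mono)
    fix \<omega>
    have "ennreal ((norm (virtual_gap t \<omega>))\<^sup>2)
        \<le> ennreal ((1 - mu * eta t) * ?a \<omega> + 2 * ?b \<omega> + 6 * L * (eta t)\<^sup>2 * heterogeneity)"
      by (rule ennreal_leI) (rule virtual_gap_sq_le)
    also have "\<dots> = ennreal ((1 - mu * eta t) * ?a \<omega>) + ennreal (2 * ?b \<omega>)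
        + ennreal (6 * L * (eta t)\<^sup>2 * heterogeneity)"
      using contraction b_nonneg[of \<omega>] \<open>6 * L * (eta t)\<^sup>2 * heterogeneity \<ge> 0\<close>
      by (simp add: ennreal_plus)
    also have "\<dots> = ennreal (1 - mu * eta t) * ennreal (?a \<omega>) + 2 * ennreal (?b \<omega>)
        + ennreal (6 * L * (eta t)\<^sup>2 * heterogeneity)"
      using contraction b_nonneg[of \<omega>] by (simp add: ennreal_mult)
    finally show "ennreal ((norm (virtual_gap t \<omega>))\<^sup>2) \<le> ennreal (1 - mu * eta t) * ennreal (?a \<omega>)
        + 2 * ennreal (?b \<omega>) + ennreal (6 * L * (eta t)\<^sup>2 * heterogeneity)" .
  qed
  also have "\<dots> = ennreal (1 - mu * eta t) * (\<integral>\<^sup>+\<omega>. ennreal (?a \<omega>) \<partial>Omega)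
      + 2 * (\<integral>\<^sup>+\<omega>. ennreal (?b \<omega>) \<partial>Omega) + ennreal (6 * L * (eta t)\<^sup>2 * heterogeneity)"
    by (simp add: nn_integral_add nn_integral_cmult emeasure_space_1)
  also have "\<dots> \<le> ennreal (1 - mu * eta t) * (\<integral>\<^sup>+\<omega>. ennreal (?a \<omega>) \<partial>Omega)
      + 2 * ennreal (4 * (eta t)\<^sup>2 * (real E - 1)\<^sup>2 * G\<^sup>2) + ennreal (6 * L * (eta t)\<^sup>2 * heterogeneity)"
    using expected_local_divergence_le[OF assms] by (intro add_mono order_refl mult_left_mono) auto
  also have "\<dots> = ennreal (1 - mu * eta t) * (\<integral>\<^sup>+\<omega>. ennreal (?a \<omega>) \<partial>Omega)
      + ennreal ((eta t)\<^sup>2 * (6 * L * heterogeneity + 8 * (real E - 1)\<^sup>2 * G\<^sup>2))"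
  proof -
    have "2 * ennreal (4 * (eta t)\<^sup>2 * (real E - 1)\<^sup>2 * G\<^sup>2) + ennreal (6 * L * (eta t)\<^sup>2 * heterogeneity)
        = ennreal (2 * (4 * (eta t)\<^sup>2 * (real E - 1)\<^sup>2 * G\<^sup>2) + 6 * L * (eta t)\<^sup>2 * heterogeneity)"
      using \<open>6 * L * (eta t)\<^sup>2 * heterogeneity \<ge> 0\<close> by (intro ennreal_double_add) auto
    also have "\<dots> = ennreal ((eta t)\<^sup>2 * (6 * L * heterogeneity + 8 * (real E - 1)\<^sup>2 * G\<^sup>2))"
      by (simp add: algebra_simps)
    finally show ?thesis
      by (simp add: add.assoc)
  qed
  finally show ?thesis .
qed

lemma expected_dist_step:
  assumes "t \<ge> 1"
  shows "(\<integral>\<^sup>+\<omega>. ennreal ((norm (Wbar (Suc t) \<omega> - wstar))\<^sup>2) \<partial>Omega)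
    \<le> ennreal (1 - mu * eta t) * (\<integral>\<^sup>+\<omega>. ennreal ((norm (Wbar t \<omega> - wstar))\<^sup>2) \<partial>Omega)
      + ennreal ((eta t)\<^sup>2 * B)"
proof -
  have "(\<integral>\<^sup>+\<omega>. ennreal ((norm (Wbar (Suc t) \<omega> - wstar))\<^sup>2) \<partial>Omega)
      = (\<integral>\<^sup>+\<omega>. ennreal ((norm (virtual_gap t \<omega>))\<^sup>2) \<partial>Omega)
        + (\<Sum>k<N. ennreal ((eta t * p k)\<^sup>2) * (\<integral>\<^sup>+\<omega>. ennreal ((norm (sgrad t k \<omega> - fgrad t k \<omega>))\<^sup>2) \<partial>Omega))"
    using nn_integral_sq_norm_sub_noise_sum[of N t] by (simp add: Wbar_Suc_sub_wstar[OF assms])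
  also have "\<dots> \<le> (\<integral>\<^sup>+\<omega>. ennreal ((norm (virtual_gap t \<omega>))\<^sup>2) \<partial>Omega)
      + (\<Sum>k<N. ennreal ((eta t * p k)\<^sup>2) * ennreal ((sigma k)\<^sup>2))"
    using grad_variance assms by (intro add_mono order_refl sum_mono mult_left_mono) auto
  also have "(\<Sum>k<N. ennreal ((eta t * p k)\<^sup>2) * ennreal ((sigma k)\<^sup>2))
      = ennreal ((eta t)\<^sup>2 * (\<Sum>k<N. (p k)\<^sup>2 * (sigma k)\<^sup>2))"
  proof -
    have "(\<Sum>k<N. ennreal ((eta t * p k)\<^sup>2) * ennreal ((sigma k)\<^sup>2))
        = (\<Sum>k<N. ennreal ((eta t)\<^sup>2 * ((p k)\<^sup>2 * (sigma k)\<^sup>2)))"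
      by (intro sum.cong refl) (simp add: ennreal_mult[symmetric] power_mult_distrib mult.assoc)
    then show ?thesis
      by (simp add: sum_ennreal sum_distrib_left)
  qed
  also have "(\<integral>\<^sup>+\<omega>. ennreal ((norm (virtual_gap t \<omega>))\<^sup>2) \<partial>Omega)
      + ennreal ((eta t)\<^sup>2 * (\<Sum>k<N. (p k)\<^sup>2 * (sigma k)\<^sup>2))
      \<le> ennreal (1 - mu * eta t) * (\<integral>\<^sup>+\<omega>. ennreal ((norm (Wbar t \<omega> - wstar))\<^sup>2) \<partial>Omega)
        + (ennreal ((eta t)\<^sup>2 * (6 * L * heterogeneity + 8 * (real E - 1)\<^sup>2 * G\<^sup>2))
          + ennreal ((eta t)\<^sup>2 * (\<Sum>k<N. (p k)\<^sup>2 * (sigma k)\<^sup>2)))"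
    using expected_virtual_gap_le[OF assms] by (simp add: add.assoc add_right_mono)
  also have "ennreal ((eta t)\<^sup>2 * (6 * L * heterogeneity + 8 * (real E - 1)\<^sup>2 * G\<^sup>2))
      + ennreal ((eta t)\<^sup>2 * (\<Sum>k<N. (p k)\<^sup>2 * (sigma k)\<^sup>2)) = ennreal ((eta t)\<^sup>2 * B)"
    using heterogeneity_nonneg L_pos
    by (simp add: B_def sum_nonneg flip: ennreal_plus distrib_left)
  finally show ?thesis .
qed

lemma expected_dist_le_of_init:
  assumes init: "(\<integral>\<^sup>+\<omega>. ennreal ((norm (fst \<omega> - wstar))\<^sup>2) \<partial>Omega) = ennreal d1" "d1 \<ge> 0"
    and "t \<ge> 1"
  shows "(\<integral>\<^sup>+\<omega>. ennreal ((norm (Wbar t \<omega> - wstar))\<^sup>2) \<partial>Omega)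
    \<le> ennreal ((4 * B / mu\<^sup>2 + (gam + 1) * d1) / (gam + real t))"
  using \<open>t \<ge> 1\<close>
proof (induction t rule: nat_induct_at_least)
  case base
  have "d1 \<le> 4 * B / mu\<^sup>2 / (gam + 1) + d1"
    using B_nonneg gam_ge(3) by simp
  then show ?case
    using init gam_ge(3) by (simp add: Wbar_1 ennreal_leI add_divide_distrib)
next
  case (Suc s)
  define v where "v = 4 * B / mu\<^sup>2 + (gam + 1) * d1"
  define u where "u = gam + real s"
  have "u \<ge> 2" "v \<ge> 0"
    using gam_ge(3) Suc.hyps B_nonneg init(2) by (simp_all add: u_def v_def)
  have "(\<integral>\<^sup>+\<omega>. ennreal ((norm (Wbar (Suc s) \<omega> - wstar))\<^sup>2) \<partial>Omega)
      \<le> ennreal (1 - mu * eta s) * ennreal (v / u) + ennreal ((eta s)\<^sup>2 * B)"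
    using expected_dist_step[OF Suc.hyps] Suc.IH
    by (simp add: u_def v_def) (meson add_mono dual_order.trans mult_left_mono order_refl zero_le)
  also have "\<dots> = ennreal ((1 - mu * eta s) * (v / u) + (eta s)\<^sup>2 * B)"
  proof -
    have "0 \<le> 1 - mu * eta s" "0 \<le> v / u" "0 \<le> (eta s)\<^sup>2 * B"
      using eta_le(2)[OF Suc.hyps] \<open>u \<ge> 2\<close> \<open>v \<ge> 0\<close> B_nonneg by simp_all
    then show ?thesis
      by (simp only: ennreal_plus[OF mult_nonneg_nonneg] ennreal_mult)
  qed
  also have "(1 - mu * eta s) * (v / u) + (eta s)\<^sup>2 * B = (1 - 2 / u) * (v / u) + (4 * B / mu\<^sup>2) / u\<^sup>2"
  proof -
    have "mu * eta s = 2 / u" "(eta s)\<^sup>2 * B = (4 * B / mu\<^sup>2) / u\<^sup>2"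
      using mu_pos by (simp_all add: eta_def u_def power_divide power_mult_distrib)
    then show ?thesis
      by simp
  qed
  also have "\<dots> \<le> v / (u + 1)"
    using B_nonneg init(2) gam_ge(3) mu_pos
    by (intro rate_recursion_step \<open>u \<ge> 2\<close>) (auto simp: v_def)
  finally show ?case
    by (simp add: u_def v_def ac_simps ennreal_leI)
qed

lemma expected_dist_le:
  assumes "t \<ge> 1"
  shows "(\<integral>\<^sup>+\<omega>. ennreal ((norm (Wbar t \<omega> - wstar))\<^sup>2) \<partial>Omega)
    \<le> ennreal (1 / (gam + real t)) * (ennreal (4 * B / mu\<^sup>2)
        + ennreal (gam + 1) * (\<integral>\<^sup>+\<omega>. ennreal ((norm (fst \<omega> - wstar))\<^sup>2) \<partial>Omega))"
proof (cases "(\<integral>\<^sup>+\<omega>. ennreal ((norm (fst \<omega> - wstar))\<^sup>2) \<partial>Omega) = \<top>")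
  case True
  then show ?thesis
    using gam_ge(3) by (simp add: ennreal_mult_top ennreal_top_mult)
next
  case False
  then obtain d1 where d1: "(\<integral>\<^sup>+\<omega>. ennreal ((norm (fst \<omega> - wstar))\<^sup>2) \<partial>Omega) = ennreal d1" "d1 \<ge> 0"
    using ennreal_cases[of "\<integral>\<^sup>+\<omega>. ennreal ((norm (fst \<omega> - wstar))\<^sup>2) \<partial>Omega"] by auto
  have nonneg: "0 \<le> 1 / (gam + real t)" "0 \<le> 4 * B / mu\<^sup>2" "0 \<le> gam + 1"
    using B_nonneg gam_ge(3) by simp_all
  have "ennreal ((4 * B / mu\<^sup>2 + (gam + 1) * d1) / (gam + real t))
      = ennreal (1 / (gam + real t) * (4 * B / mu\<^sup>2 + (gam + 1) * d1))"
    by simp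
  also have "\<dots> = ennreal (1 / (gam + real t)) * (ennreal (4 * B / mu\<^sup>2) + ennreal (gam + 1) * ennreal d1)"
    using nonneg \<open>d1 \<ge> 0\<close> by (simp only: ennreal_mult add_nonneg_nonneg mult_nonneg_nonneg ennreal_plus)
  then show ?thesis
    using expected_dist_le_of_init[OF d1 assms] d1(1) by simp
qed

lemma expected_reconstruction_error_le:
  fixes Rf :: "_ \<Rightarrow> _ \<Rightarrow> 'v::euclidean_space"
  assumes Rf_meas: "\<forall>v. (\<lambda>r. Rf r v) \<in> borel_measurable Q"
    and Rf_lip: "\<forall>r v w. dist (Rf r v) (Rf r w) \<le> LR * dist v w"
    and "t \<ge> 1"
  shows "(\<integral>\<^sup>+\<omega>. ennreal ((norm (x - Rf (snd (snd \<omega>))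
            (fedavg_global p N E eta sample_grad (fst \<omega>) (\<lambda>s k. fst (snd \<omega>) (s, k)) t)))\<^sup>2) \<partial>Omega)
    \<le> 2 * (\<integral>\<^sup>+\<omega>. ennreal ((norm (x - Rf (snd (snd \<omega>)) wstar))\<^sup>2) \<partial>Omega)
      + ennreal (2 * LR\<^sup>2 / (gam + real t)) * (ennreal (4 * B / mu\<^sup>2)
        + ennreal (gam + 1) * (\<integral>\<^sup>+\<omega>. ennreal ((norm (fst \<omega> - wstar))\<^sup>2) \<partial>Omega))"
proof -
  have "(\<lambda>\<omega>. snd (snd \<omega>)) \<in> measurable Omega Q"
    unfolding Omega_eq by measurable
  then have [measurable]: "(\<lambda>\<omega>. Rf (snd (snd \<omega>)) wstar) \<in> borel_measurable Omega"
    using measurable_compose Rf_meas by blast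
  note [measurable] = Wbar_measurable
  have measurable: "(\<lambda>\<omega>. ennreal ((norm (x - Rf (snd (snd \<omega>)) wstar))\<^sup>2)) \<in> borel_measurable Omega"
    "(\<lambda>\<omega>. ennreal ((norm (Wbar t \<omega> - wstar))\<^sup>2)) \<in> borel_measurable Omega"
    by measurable
  have "(\<integral>\<^sup>+\<omega>. ennreal ((norm (x - Rf (snd (snd \<omega>))
        (fedavg_global p N E eta sample_grad (fst \<omega>) (\<lambda>s k. fst (snd \<omega>) (s, k)) t)))\<^sup>2) \<partial>Omega)
      = (\<integral>\<^sup>+\<omega>. ennreal ((norm (x - Rf (snd (snd \<omega>)) (Wbar t \<omega>)))\<^sup>2) \<partial>Omega)"
    using AE_w_iter_eq by (rule nn_integral_cong_AE[OF eventually_mono])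
      (auto simp: fedavg_global_def Wbar_def w_iter_def intro!: sum.cong)
  also have "\<dots> \<le> 2 * (\<integral>\<^sup>+\<omega>. ennreal ((norm (x - Rf (snd (snd \<omega>)) wstar))\<^sup>2) \<partial>Omega)
      + ennreal (2 * LR\<^sup>2) * (\<integral>\<^sup>+\<omega>. ennreal ((norm (Wbar t \<omega> - wstar))\<^sup>2) \<partial>Omega)"
    by (rule nn_integral_lipschitz_sq_dist_le[OF Rf_lip measurable])
  also have "\<dots> \<le> 2 * (\<integral>\<^sup>+\<omega>. ennreal ((norm (x - Rf (snd (snd \<omega>)) wstar))\<^sup>2) \<partial>Omega)
      + ennreal (2 * LR\<^sup>2) * (ennreal (1 / (gam + real t)) * (ennreal (4 * B / mu\<^sup>2)
        + ennreal (gam + 1) * (\<integral>\<^sup>+\<omega>. ennreal ((norm (fst \<omega> - wstar))\<^sup>2) \<partial>Omega)))"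
    using expected_dist_le[OF \<open>t \<ge> 1\<close>] by (intro add_mono order_refl mult_left_mono) auto
  also have "\<dots> = 2 * (\<integral>\<^sup>+\<omega>. ennreal ((norm (x - Rf (snd (snd \<omega>)) wstar))\<^sup>2) \<partial>Omega)
      + ennreal (2 * LR\<^sup>2 / (gam + real t)) * (ennreal (4 * B / mu\<^sup>2)
        + ennreal (gam + 1) * (\<integral>\<^sup>+\<omega>. ennreal ((norm (fst \<omega> - wstar))\<^sup>2) \<partial>Omega))"
  proof -
    have "ennreal (2 * LR\<^sup>2) * ennreal (1 / (gam + real t)) = ennreal (2 * LR\<^sup>2 / (gam + real t))"
      using gam_ge(3) by (simp add: ennreal_mult[symmetric])
    then show ?thesis
      by (simp only: mult.assoc[symmetric])
  qed
  finally show ?thesis .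
qed

end

theorem theorem1:
  fixes p :: "nat \<Rightarrow> real" and N :: nat and E :: nat
    and D :: "nat \<Rightarrow> 'z list"
    and ell :: "'a::euclidean_space \<Rightarrow> 'z \<Rightarrow> real" and g :: "'a \<Rightarrow> 'z \<Rightarrow> 'a"
    and L mu G LR :: real and sigma :: "nat \<Rightarrow> real"
    and wstar :: 'a
    and W1 :: "'a measure" and Q :: "'r measure"
    and Rf :: "'r \<Rightarrow> 'a \<Rightarrow> real^'d" and x :: "real^'d"
    and t :: nat
  assumes p_nonneg: "\<forall>k<N. p k \<ge> 0"
    and p_sum: "(\<Sum>k<N. p k) = 1"
    and E_pos: "E \<ge> 1"
    and D_nonempty: "\<forall>k<N. D k \<noteq> []"
    and grad: "\<forall>k<N. \<forall>j<length (D k). \<forall>w. GDERIV (\<lambda>v. ell v (D k ! j)) w :> g w (D k ! j)"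
    and A1: "\<forall>k<N. \<forall>v w. local_obj ell D k v \<le> local_obj ell D k w
               + (v - w) \<bullet> local_grad g D k w + L / 2 * (norm (v - w))\<^sup>2"
    and mu_pos: "mu > 0"
    and A2: "\<forall>k<N. \<forall>v w. local_obj ell D k v \<ge> local_obj ell D k w
               + (v - w) \<bullet> local_grad g D k w + mu / 2 * (norm (v - w))\<^sup>2"
    and wstar_min: "\<forall>w. global_obj p N ell D wstar \<le> global_obj p N ell D w"
    and W1_prob: "prob_space W1" and W1_sets: "sets W1 = sets borel"
    and Q_prob: "prob_space Q"
    and Rf_meas: "\<forall>v. (\<lambda>r. Rf r v) \<in> borel_measurable Q"
    and Rf_lip: "\<forall>r v w. dist (Rf r v) (Rf r w) \<le> LR * dist v w"
    and x_box: "\<forall>i. x $ i \<in> {0..1}"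
    and A3: "\<forall>k<N. \<forall>s\<ge>1.
        (\<integral>\<^sup>+ \<omega>. ennreal ((norm (
            g (fedavg_w p N E (\<lambda>s. 2 / (mu * (max (8 * L / mu) (real E) + real s)))
                 (\<lambda>k w j. g w (D k ! j)) (fst \<omega>) (\<lambda>s k. fst (snd \<omega>) (s, k)) s k)
              (D k ! (fst (snd \<omega>) (s, k)))
          - local_grad g D k (fedavg_w p N E (\<lambda>s. 2 / (mu * (max (8 * L / mu) (real E) + real s)))
                 (\<lambda>k w j. g w (D k ! j)) (fst \<omega>) (\<lambda>s k. fst (snd \<omega>) (s, k)) s k)))\<^sup>2)
          \<partial>fedavg_space W1 N D Q) \<le> ennreal ((sigma k)\<^sup>2)"
    and A4: "\<forall>k<N. \<forall>s\<ge>1.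
        (\<integral>\<^sup>+ \<omega>. ennreal ((norm (
            g (fedavg_w p N E (\<lambda>s. 2 / (mu * (max (8 * L / mu) (real E) + real s)))
                 (\<lambda>k w j. g w (D k ! j)) (fst \<omega>) (\<lambda>s k. fst (snd \<omega>) (s, k)) s k)
              (D k ! (fst (snd \<omega>) (s, k)))))\<^sup>2)
          \<partial>fedavg_space W1 N D Q) \<le> ennreal (G\<^sup>2)"
    and t_pos: "t \<ge> 1"
  shows "(\<integral>\<^sup>+ \<omega>. ennreal ((norm (x - Rf (snd (snd \<omega>))
              (fedavg_global p N E (\<lambda>s. 2 / (mu * (max (8 * L / mu) (real E) + real s)))
                 (\<lambda>k w j. g w (D k ! j)) (fst \<omega>) (\<lambda>s k. fst (snd \<omega>) (s, k)) t)))\<^sup>2)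
            \<partial>fedavg_space W1 N D Q)
    \<le> 2 * (\<integral>\<^sup>+ \<omega>. ennreal ((norm (x - Rf (snd (snd \<omega>)) wstar))\<^sup>2) \<partial>fedavg_space W1 N D Q)
      + ennreal (2 * LR\<^sup>2 / (max (8 * L / mu) (real E) + real t)) *
        (ennreal (4 * ((\<Sum>k<N. (p k)\<^sup>2 * (sigma k)\<^sup>2)
                        + 6 * L * (global_obj p N ell D wstar
                                   - (\<Sum>k<N. p k * Inf (range (local_obj ell D k))))
                        + 8 * (real E - 1)\<^sup>2 * G\<^sup>2) / mu\<^sup>2)
         + ennreal (max (8 * L / mu) (real E) + 1) *
           (\<integral>\<^sup>+ \<omega>. ennreal ((norm (fst \<omega> - wstar))\<^sup>2) \<partial>fedavg_space W1 N D Q))"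
proof -
  interpret fedavg p N E D ell g L mu wstar W1 Q
    by (rule fedavg.intro) fact+
  interpret fedavg_bounded_grad p N E D ell g L mu wstar W1 Q sigma G
    by unfold_locales (use A3 A4 in \<open>simp_all add: w_iter_def eta_def gam_def sample_grad_def Omega_def\<close>)
  show ?thesis
    using expected_reconstruction_error_le[OF Rf_meas Rf_lip t_pos, of x]
    unfolding eta_def gam_def sample_grad_def Omega_def B_def heterogeneity_def .
qed

end
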